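(* Let $\mathbf{B}$ be a binomial ring and $n\ge0$. The pure mazes (those with all labels equal to $1$) form a basis of the category $\mathfrak{Laby}_n$; that is, for finite sets $X,Y$, the images of the pure mazes $X\to Y$ having at most $n$ passages form a basis of the $\mathbf{B}$-module $\mathfrak{Laby}_n(X,Y)$.
   Context: Binomial ring: commutative unital, torsion-free, with $\binom ak=a(a-1)\cdots(a-k+1)/k!\in\mathbf{B}$ for all $a\in\mathbf{B}$, $k\ge0$. A passage $p\colon x\to y$ carries label $\overline p\in\mathbf{B}$; a maze $P\colon X\to Y$ between finite sets is a finite multi-set of passages with every element of $X$ a source and every element of $Y$ a target; $|P|$ is the number of passages with multiplicity. $\mathfrak{Laby}$: objects formal finite direct sums of finite sets; $\mathfrak{Laby}(X,Y)$ generated by mazes modulo $P\cup\{x\xrightarrow0y\}=0$ and $P\cup\{x\xrightarrow{a+b}y\}=P\cup\{x\xrightarrow ay\}+P\cup\{x\xrightarrow by\}+P\cup\{x\xrightarrow ay,x\xrightarrow by\}$; composition $P\circ Q=\sum_{U\sqsubseteq P\boxtimes Q}U$ ($U$ a sub-multi-set of composable pairs using every passage occurrence of $P$ and $Q$, read as the maze with passages $x\xrightarrow{\overline p\overline q}z$). $\mathfrak{Laby}_n$ is the quotient of $\mathfrak{Laby}$ by (III) $P=0$ whenever $|P|>n$ and (IV) $P=\sum_d\prod_p\binom{\overline p}{d_p}I_d$, $d$ ranging over assignments $d_p\ge1$ to passage occurrences $p$ of $P$ and $I_d$ the maze with $d_p$ passages from the source to the target of $p$ labelled $1$. *)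

theory Defs
  imports Main "HOL-Library.Multiset"
begin

definition binomial_ring :: "'b::comm_ring_1 itself \<Rightarrow> bool" where
  "binomial_ring _ \<longleftrightarrow>
     (\<forall>(m::nat) (a::'b). m > 0 \<longrightarrow> of_nat m * a = 0 \<longrightarrow> a = 0) \<and>
     (\<forall>(a::'b) (k::nat). \<exists>c. of_nat (fact k) * c = (\<Prod>i<k. a - of_nat i))"

text \<open>The binomial coefficient (a choose k) in a binomial ring (unique by torsion-freeness).\<close>
definition bin :: "'b::comm_ring_1 \<Rightarrow> nat \<Rightarrow> 'b" where
  "bin a k = (THE c. of_nat (fact k) * c = (\<Prod>i<k. a - of_nat i))"

text \<open>A passage is a triple (source, target, label); a maze is a finite multiset of passages.
  A maze P is a maze X \<rightarrow> Y iff its set of sources is X and its set of targets is Y.\<close>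
type_synonym ('a, 'b) maze = "('a \<times> 'a \<times> 'b) multiset"

definition srcs :: "('a, 'b) maze \<Rightarrow> 'a set" where
  "srcs P = fst ` set_mset P"

definition tgts :: "('a, 'b) maze \<Rightarrow> 'a set" where
  "tgts P = (\<lambda>p. fst (snd p)) ` set_mset P"

definition is_maze :: "'a set \<Rightarrow> 'a set \<Rightarrow> ('a, 'b) maze \<Rightarrow> bool" where
  "is_maze X Y P \<longleftrightarrow> srcs P = X \<and> tgts P = Y"

definition pure :: "('a, 'b::one) maze \<Rightarrow> bool" where
  "pure P \<longleftrightarrow> (\<forall>p \<in># P. snd (snd p) = 1)"

text \<open>Elements of the free module are coefficient functions on mazes (finitely supported).\<close>
definition delta :: "'m \<Rightarrow> 'm \<Rightarrow> 'b::comm_ring_1" where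
  "delta m = (\<lambda>m'. if m' = m then 1 else 0)"

definition supp :: "('m \<Rightarrow> 'b::zero) \<Rightarrow> 'm set" where
  "supp f = {m. f m \<noteq> 0}"

inductive_set lspan :: "('m \<Rightarrow> 'b::comm_ring_1) set \<Rightarrow> ('m \<Rightarrow> 'b) set"
  for G :: "('m \<Rightarrow> 'b) set" where
  zero: "(\<lambda>_. 0) \<in> lspan G"
| gen: "g \<in> G \<Longrightarrow> g \<in> lspan G"
| add: "a \<in> lspan G \<Longrightarrow> b \<in> lspan G \<Longrightarrow> (\<lambda>m. a m + b m) \<in> lspan G"
| smult: "a \<in> lspan G \<Longrightarrow> (\<lambda>m. c * a m) \<in> lspan G"

text \<open>For enumerations ps of P and qs of Q (with Q : X \<rightarrow> Y, P : Y \<rightarrow> Z), a composable pair is a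
  pair (i,j) of occurrence indices with source of ps!i = target of qs!j.\<close>
definition comp_pairs :: "('a \<times> 'a \<times> 'b) list \<Rightarrow> ('a \<times> 'a \<times> 'b) list \<Rightarrow> (nat \<times> nat) set" where
  "comp_pairs ps qs = {(i, j). i < length ps \<and> j < length qs \<and> fst (ps ! i) = fst (snd (qs ! j))}"

definition comp_subsets :: "('a \<times> 'a \<times> 'b) list \<Rightarrow> ('a \<times> 'a \<times> 'b) list \<Rightarrow> (nat \<times> nat) set set" where
  "comp_subsets ps qs = {U. U \<subseteq> comp_pairs ps qs \<and> fst ` U = {..<length ps} \<and> snd ` U = {..<length qs}}"

definition maze_of :: "('a \<times> 'a \<times> 'b::times) list \<Rightarrow> ('a \<times> 'a \<times> 'b) list \<Rightarrow> (nat \<times> nat) set \<Rightarrow> ('a, 'b) maze" where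
  "maze_of ps qs U = image_mset (\<lambda>(i, j). (fst (qs ! j), fst (snd (ps ! i)), snd (snd (ps ! i)) * snd (snd (qs ! j)))) (mset_set U)"

text \<open>P \<circ> Q as an element of the free module (independent of the chosen enumerations).\<close>
definition comp_maze :: "('a, 'b::comm_ring_1) maze \<Rightarrow> ('a, 'b) maze \<Rightarrow> (('a, 'b) maze \<Rightarrow> 'b)" where
  "comp_maze P Q = (let ps = (SOME ps. mset ps = P); qs = (SOME qs. mset qs = Q) in
      (\<lambda>M. of_nat (card {U \<in> comp_subsets ps qs. maze_of ps qs U = M})))"

definition comp :: "(('a, 'b::comm_ring_1) maze \<Rightarrow> 'b) \<Rightarrow> (('a, 'b) maze \<Rightarrow> 'b) \<Rightarrow> (('a, 'b) maze \<Rightarrow> 'b)" where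
  "comp f g = (\<lambda>M. \<Sum>P\<in>supp f. \<Sum>Q\<in>supp g. f P * g Q * comp_maze P Q M)"

definition laby_rels :: "(('a, 'b::comm_ring_1) maze \<Rightarrow> 'b) set" where
  "laby_rels =
     {delta (P + {#(x, y, 0)#}) | P x y. True} \<union>
     {(\<lambda>M. delta (P + {#(x, y, a + b)#}) M - delta (P + {#(x, y, a)#}) M
            - delta (P + {#(x, y, b)#}) M - delta (P + {#(x, y, a), (x, y, b)#}) M) | P x y a b. True}"

definition rels_III :: "nat \<Rightarrow> (('a, 'b::comm_ring_1) maze \<Rightarrow> 'b) set" where
  "rels_III n = {delta P | P. size P > n}"

text \<open>For an enumeration ps of the passage occurrences of P and an assignment
  ds of multiplicities d_p \<ge> 1, I_d has d_p passages from the source to the target of p labelled 1.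
  Terms with |I_d| > n vanish by (III), so the sum is restricted to those with |I_d| \<le> n.\<close>
definition I_d :: "('a \<times> 'a \<times> 'b::one) list \<Rightarrow> nat list \<Rightarrow> ('a, 'b) maze" where
  "I_d ps ds = mset (concat (map (\<lambda>(p, k). replicate k (fst p, fst (snd p), 1)) (zip ps ds)))"

definition assignments :: "nat \<Rightarrow> 'x list \<Rightarrow> nat list set" where
  "assignments n ps = {ds. length ds = length ps \<and> (\<forall>k \<in> set ds. k \<ge> 1) \<and> sum_list ds \<le> n}"

definition rels_IV :: "nat \<Rightarrow> (('a, 'b::comm_ring_1) maze \<Rightarrow> 'b) set" where
  "rels_IV n = {(\<lambda>M. delta (mset ps) M -
       (\<Sum>ds\<in>assignments n ps.
          prod_list (map (\<lambda>(p, k). bin (snd (snd p)) k) (zip ps ds)) * delta (I_d ps ds) M))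
     | ps. True}"

text \<open>The kernel of the projection from the free module on mazes onto Laby_n: the two-sided
  ideal generated by all relations (I)--(IV), i.e. the span of all composites A \<circ> r \<circ> B with
  A, B mazes and r a relation (identity mazes are mazes, so r itself is included).\<close>
definition laby_n_kernel :: "nat \<Rightarrow> (('a, 'b::comm_ring_1) maze \<Rightarrow> 'b) set" where
  "laby_n_kernel n = lspan {comp (delta A) (comp r (delta B)) | A B r.
        r \<in> laby_rels \<union> rels_III n \<union> rels_IV n}"

end

theory Submission
  imports Defs "HOL-Library.Function_Algebras"
begin

text \<open>
  Spanning: relation (IV) itself writes every maze, modulo the kernel, as a combination of pure
  mazes with at most \<open>n\<close> passages.

  Independence: read \<open>v :: 'a \<times> 'a \<Rightarrow> B\<close> as a matrix, on which a passage \<open>x \<rightarrow> y\<close> labelled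
  \<open>a\<close> acts as \<open>a E\<^sub>x\<^sub>y\<close>, and let a maze with passages \<open>p\<^sub>1, \<dots>, p\<^sub>k\<close> send a function \<open>\<phi>\<close>
  of matrices to \<open>v \<mapsto> (\<Delta>\<^bsub>p\<^sub>1 v\<^esub> \<cdots> \<Delta>\<^bsub>p\<^sub>k v\<^esub> \<phi>)(0)\<close>. By inclusion--exclusion,
  composition of mazes becomes composition of these operators. For a polynomial map \<open>\<phi>\<close> of
  degree \<open>\<le> n\<close> that is a numerical polynomial on every line, (I) and (II) hold because the
  action of a passage is additive in its label, (III) because differences of order \<open>> n\<close>
  vanish, and (IV) is Newton's expansion \<open>\<Delta>\<^bsub>a h\<^esub> = \<Sum>\<^sub>d (a choose d) \<Delta>\<^sub>h\<^sup>d\<close>; so every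
  element of the kernel is annihilated by every such \<open>\<phi>\<close>. For a pure maze \<open>Q\<close> with \<open>q\<^sub>x\<^sub>y\<close>
  passages \<open>x \<rightarrow> y\<close>, the function \<open>v \<mapsto> \<Prod> (v\<^sub>x\<^sub>y choose q\<^sub>x\<^sub>y)\<close> is one of them, and at the
  identity matrix it is \<open>1\<close> on \<open>Q\<close> and \<open>0\<close> on all other pure mazes. Hence a kernel element
  supported on pure mazes vanishes.
\<close>

section \<open>Finite differences and polynomial maps\<close>

definition fwd_diff :: "'v::ab_group_add \<Rightarrow> ('v \<Rightarrow> 'b::comm_ring_1) \<Rightarrow> 'v \<Rightarrow> 'b" where
  "fwd_diff h f = (\<lambda>w. f (w + h) - f w)"

lemma fwd_diff_add: "fwd_diff h (\<lambda>w. f w + g w) = (\<lambda>w. fwd_diff h f w + fwd_diff h g w)"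
  by (auto simp: fwd_diff_def)

lemma fwd_diff_scale: "fwd_diff h (\<lambda>w. c * f w) = (\<lambda>w. c * fwd_diff h f w)"
  by (auto simp: fwd_diff_def algebra_simps)

lemma fwd_diff_commute: "fwd_diff h (fwd_diff k f) = fwd_diff k (fwd_diff h f)"
  by (auto simp: fwd_diff_def algebra_simps)

lemma fwd_diff_power_scale: "(fwd_diff h ^^ e) (\<lambda>a. c * g a) = (\<lambda>a. c * (fwd_diff h ^^ e) g a)"
  by (induction e) (simp_all add: fwd_diff_scale)

text \<open>Polynomial maps of degree \<open>\<le> m\<close> in the sense of Eilenberg and Mac Lane.\<close>
fun polynomial_map :: "nat \<Rightarrow> ('v::ab_group_add \<Rightarrow> 'b::comm_ring_1) \<Rightarrow> bool" where
  "polynomial_map 0 f = (\<forall>h w. f (w + h) = f w)"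
| "polynomial_map (Suc m) f = (\<forall>h. polynomial_map m (fwd_diff h f))"

lemma polynomial_map_add:
  "polynomial_map m f \<Longrightarrow> polynomial_map m g \<Longrightarrow> polynomial_map m (\<lambda>w. f w + g w)"
  by (induction m arbitrary: f g) (auto simp: fwd_diff_add)

lemma polynomial_map_scale: "polynomial_map m f \<Longrightarrow> polynomial_map m (\<lambda>w. c * f w)"
  by (induction m arbitrary: f) (auto simp: fwd_diff_scale)

lemma polynomial_map_const: "polynomial_map m (\<lambda>w. c)"
proof (induction m arbitrary: c)
  case (Suc m)
  have "fwd_diff h (\<lambda>w. c) = (\<lambda>w. 0)" for h :: 'a
    by (simp add: fwd_diff_def)
  then show ?case using Suc by simp
qed simp

lemma polynomial_map_sum:
  "finite I \<Longrightarrow> (\<And>i. i \<in> I \<Longrightarrow> polynomial_map m (f i)) \<Longrightarrow> polynomial_map m (\<lambda>w. \<Sum>i\<in>I. f i w)"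
  by (induction I rule: finite_induct) (auto intro: polynomial_map_add polynomial_map_const)

lemma polynomial_map_0_fwd_diff: "polynomial_map 0 f \<Longrightarrow> fwd_diff h f = (\<lambda>w. 0)"
  by (auto simp: fwd_diff_def)

lemma polynomial_map_0_eq: "polynomial_map 0 f \<Longrightarrow> f w = f 0"
  by (metis add_0 polynomial_map.simps(1))

lemma polynomial_map_Suc: "polynomial_map m f \<Longrightarrow> polynomial_map (Suc m) f"
proof (induction m arbitrary: f)
  case 0
  then show ?case by (simp add: polynomial_map_0_fwd_diff polynomial_map_const)
qed simp

lemma polynomial_map_mono:
  assumes "polynomial_map m f" "m \<le> m'"
  shows "polynomial_map m' f"
  using assms(2) by (induction m' rule: dec_induct) (auto simp del: polynomial_map.simps intro: assms(1) polynomial_map_Suc)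

lemma polynomial_map_compose_additive:
  assumes "\<And>x y. L (x + y) = L x + L y"
  shows "polynomial_map m f \<Longrightarrow> polynomial_map m (\<lambda>w. f (L w))"
proof (induction m arbitrary: f)
  case (Suc m)
  have "fwd_diff h (\<lambda>w. f (L w)) = (\<lambda>w. fwd_diff (L h) f (L w))" for h
    by (auto simp: fwd_diff_def assms)
  then show ?case using Suc by simp
qed (simp add: assms)

lemma polynomial_map_translate: "polynomial_map m f \<Longrightarrow> polynomial_map m (\<lambda>w. f (w + c))"
proof (induction m arbitrary: f)
  case 0
  then show ?case by (simp add: add.assoc[symmetric] add.commute[of _ c])
next
  case (Suc m)
  have "fwd_diff h (\<lambda>w. f (w + c)) = (\<lambda>w. fwd_diff h f (w + c))" for h
    by (auto simp: fwd_diff_def algebra_simps)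
  then show ?case using Suc by simp
qed

text \<open>Induction on \<open>m1 + m2\<close> via the Leibniz rule
  \<open>\<Delta>\<^sub>h(f g) = (\<Delta>\<^sub>h f) \<cdot> g(\<cdot> + h) + f \<cdot> \<Delta>\<^sub>h g\<close>.\<close>
lemma polynomial_map_mult:
  "polynomial_map m1 f \<Longrightarrow> polynomial_map m2 g \<Longrightarrow> polynomial_map (m1 + m2) (\<lambda>w. f w * g w)"
proof (induction "m1 + m2" arbitrary: m1 m2 f g rule: less_induct)
  case less
  show ?case
  proof (cases m1)
    case 0
    then have "(\<lambda>w. f w * g w) = (\<lambda>w. f 0 * g w)"
      using less.prems polynomial_map_0_eq by metis
    then show ?thesis using polynomial_map_scale[OF less.prems(2)] 0 by simp
  next
    case (Suc m1')
    show ?thesis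
    proof (cases m2)
      case 0
      then have "(\<lambda>w. f w * g w) = (\<lambda>w. g 0 * f w)"
        using less.prems polynomial_map_0_eq by (metis mult.commute)
      then show ?thesis using polynomial_map_scale[OF less.prems(1)] 0 by simp
    next
      case (Suc m2')
      have "polynomial_map (m1' + m2) (fwd_diff h (\<lambda>w. f w * g w))" for h
      proof -
        have leibniz: "fwd_diff h (\<lambda>w. f w * g w) = (\<lambda>w. fwd_diff h f w * g (w + h) + f w * fwd_diff h g w)"
          by (auto simp: fwd_diff_def algebra_simps)
        have "polynomial_map (m1' + m2) (\<lambda>w. fwd_diff h f w * g (w + h))"
          using less.hyps[of m1' m2 "fwd_diff h f" "\<lambda>w. g (w + h)"] less.prems \<open>m1 = Suc m1'\<close>
            polynomial_map_translate by auto
        moreover have "polynomial_map (m1' + m2) (\<lambda>w. f w * fwd_diff h g w)"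
          using less.hyps[of m1 m2' f "fwd_diff h g"] less.prems \<open>m2 = Suc m2'\<close> \<open>m1 = Suc m1'\<close> by auto
        ultimately show ?thesis unfolding leibniz by (rule polynomial_map_add)
      qed
      then show ?thesis using \<open>m1 = Suc m1'\<close> by simp
    qed
  qed
qed

lemma polynomial_map_fwd_diff_power:
  "polynomial_map m f \<Longrightarrow> d \<le> m \<Longrightarrow> polynomial_map (m - d) ((fwd_diff h ^^ d) f)"
proof (induction d)
  case (Suc d)
  then have "polynomial_map (Suc (m - Suc d)) ((fwd_diff h ^^ d) f)"
    by (simp add: Suc_diff_Suc)
  then show ?case by simp
qed simp

lemma polynomial_map_fwd_diff_power_eq_0:
  "polynomial_map m f \<Longrightarrow> (fwd_diff h ^^ Suc m) f = (\<lambda>w. 0)"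
proof -
  assume "polynomial_map m f"
  then have "polynomial_map 0 ((fwd_diff h ^^ m) f)"
    using polynomial_map_fwd_diff_power[of m f m h] by simp
  then show ?thesis by (simp only: funpow.simps(2) o_apply) (rule polynomial_map_0_fwd_diff)
qed

interpretation fwd_diff_commute: comp_fun_commute "\<lambda>p. fwd_diff (H p)"
  by unfold_locales (auto simp: fwd_diff_commute)

definition multi_diff :: "('p \<Rightarrow> 'v::ab_group_add) \<Rightarrow> 'p multiset \<Rightarrow> ('v \<Rightarrow> 'b::comm_ring_1) \<Rightarrow> 'v \<Rightarrow> 'b" where
  "multi_diff H M f = fold_mset (\<lambda>p. fwd_diff (H p)) f M"

lemma multi_diff_empty [simp]: "multi_diff H {#} f = f"
  by (simp add: multi_diff_def)

lemma multi_diff_add_mset [simp]: "multi_diff H (add_mset p M) f = fwd_diff (H p) (multi_diff H M f)"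
  by (simp add: multi_diff_def)

lemma multi_diff_union: "multi_diff H (M + N) f = multi_diff H N (multi_diff H M f)"
  by (induction N) auto

lemma multi_diff_replicate: "multi_diff H (replicate_mset d q) f = (fwd_diff (H q) ^^ d) f"
  by (induction d) simp_all

lemma multi_diff_fwd_diff: "multi_diff H M (fwd_diff h f) = fwd_diff h (multi_diff H M f)"
  by (induction M) (simp_all add: fwd_diff_commute)

lemma multi_diff_scale: "multi_diff H M (\<lambda>w. c * f w) = (\<lambda>w. c * multi_diff H M f w)"
  by (induction M) (auto simp: fwd_diff_scale)

lemma multi_diff_add: "multi_diff H M (\<lambda>w. f w + g w) = (\<lambda>w. multi_diff H M f w + multi_diff H M g w)"
  by (induction M) (auto simp: fwd_diff_add)

lemma multi_diff_zero: "multi_diff H M (\<lambda>w. 0) = (\<lambda>w. 0)"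
  using multi_diff_scale[of H M 0 "\<lambda>w. 0"] by simp

lemma multi_diff_sum:
  "finite I \<Longrightarrow> multi_diff H M (\<lambda>w. \<Sum>i\<in>I. f i w) = (\<lambda>w. \<Sum>i\<in>I. multi_diff H M (f i) w)"
  by (induction I rule: finite_induct) (simp_all add: multi_diff_zero multi_diff_add)

lemma polynomial_map_multi_diff:
  "polynomial_map m f \<Longrightarrow> size M \<le> m \<Longrightarrow> polynomial_map (m - size M) (multi_diff H M f)"
proof (induction M)
  case (add p M)
  then have "polynomial_map (Suc (m - size (add_mset p M))) (multi_diff H M f)"
    by (simp add: Suc_diff_Suc)
  then show ?case by simp
qed simp

lemma multi_diff_eq_0: "polynomial_map m f \<Longrightarrow> m < size M \<Longrightarrow> multi_diff H M f = (\<lambda>w. 0)"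
proof (induction M)
  case (add p M)
  show ?case
  proof (cases "m < size M")
    case True
    then show ?thesis using add by (simp add: fwd_diff_def)
  next
    case False
    then have "polynomial_map 0 (multi_diff H M f)"
      using add.prems polynomial_map_multi_diff[OF add.prems(1), of M H] by simp
    then show ?thesis by (simp add: polynomial_map_0_fwd_diff)
  qed
qed simp

lemma multi_diff_mset_set:
  assumes "finite U"
  shows "multi_diff H (image_mset g (mset_set U)) f w =
    (\<Sum>V\<in>Pow U. (-1) ^ (card U - card V) * f (w + (\<Sum>u\<in>V. H (g u))))"
  using assms
proof (induction U arbitrary: w rule: finite_induct)
  case (insert u U)
  define F where "F V = f (w + (\<Sum>u\<in>V. H (g u)))" for V
  have fin: "finite (Pow U)" using insert by simp
  have inj: "inj_on (insert u) (Pow U)" using insert.hyps by (auto simp: inj_on_def)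
  have disj: "Pow U \<inter> insert u ` Pow U = {}" using insert.hyps by auto
  have with_u: "(\<Sum>V\<in>insert u ` Pow U. (-1) ^ (card (insert u U) - card V) * F V)
      = (\<Sum>V\<in>Pow U. (-1) ^ (card U - card V) * f (w + H (g u) + (\<Sum>u\<in>V. H (g u))))"
  proof (subst sum.reindex[OF inj], rule sum.cong[OF refl])
    fix V assume "V \<in> Pow U"
    then have "u \<notin> V" "finite V" using insert.hyps finite_subset by auto
    then show "((\<lambda>V. (-1) ^ (card (insert u U) - card V) * F V) \<circ> insert u) V
        = (-1) ^ (card U - card V) * f (w + H (g u) + (\<Sum>u\<in>V. H (g u)))"
      using insert.hyps by (simp add: F_def add.assoc)
  qed
  have without_u: "(\<Sum>V\<in>Pow U. (-1) ^ (card (insert u U) - card V) * F V)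
      = - (\<Sum>V\<in>Pow U. (-1) ^ (card U - card V) * F V)"
  proof -
    have "(-1::'b) ^ (card (insert u U) - card V) = - ((-1) ^ (card U - card V))" if "V \<in> Pow U" for V
      using that insert.hyps by (simp add: Suc_diff_le card_mono)
    then show ?thesis by (simp add: sum_negf[symmetric])
  qed
  have "multi_diff H (image_mset g (mset_set (insert u U))) f w
        = multi_diff H (image_mset g (mset_set U)) f (w + H (g u))
          - multi_diff H (image_mset g (mset_set U)) f w"
    using insert.hyps by (simp add: fwd_diff_def)
  also have "\<dots> = (\<Sum>V\<in>insert u ` Pow U. (-1) ^ (card (insert u U) - card V) * F V)
                 + (\<Sum>V\<in>Pow U. (-1) ^ (card (insert u U) - card V) * F V)"
    using insert.IH with_u without_u by (simp add: F_def)
  also have "\<dots> = (\<Sum>V\<in>Pow (insert u U). (-1) ^ (card (insert u U) - card V) * F V)"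
    unfolding Pow_insert by (subst sum.union_disjoint[OF fin finite_imageI[OF fin] disj]) (simp_all add: fin add.commute)
  finally show ?case by (simp add: F_def)
qed simp

section \<open>Inclusion--exclusion\<close>

lemma neg_one_power_diff:
  "k \<le> n \<Longrightarrow> (-1::'b::ring_1) ^ (n - k) = (-1) ^ n * (-1) ^ k"
  by (simp add: neg_one_power_add_eq_neg_one_power_diff[symmetric] power_add)

lemma sum_supersets_neg_one_power:
  assumes "finite I" "R \<subseteq> I"
  shows "(\<Sum>S | R \<subseteq> S \<and> S \<subseteq> I. (-1::'b::ring_1) ^ card S) = (if R = I then (-1) ^ card I else 0)"
proof (cases "R = I")
  case True
  then have "{S. R \<subseteq> S \<and> S \<subseteq> I} = {I}" by auto
  then show ?thesis using True by simp
next
  case False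
  then have "R \<subset> I" using assms(2) by blast
  have "finite {S. R \<subseteq> S \<and> S \<subseteq> I}" using assms(1) by (simp add: finite_subset[of _ "Pow I"] subset_iff)
  moreover have "card {S. S \<in> {S. R \<subseteq> S \<and> S \<subseteq> I} \<and> even (card S)}
      = card {S. S \<in> {S. R \<subseteq> S \<and> S \<subseteq> I} \<and> odd (card S)}"
    using card_subsupersets_even_odd[OF assms(1) \<open>R \<subset> I\<close>] by (simp add: conj_ac)
  ultimately show ?thesis using False by (simp add: sum_alternating_cancels)
qed

lemma sum_Pow_Moebius:
  fixes g :: "'a set \<Rightarrow> 'b::comm_ring_1"
  assumes "finite W"
  shows "(\<Sum>U\<in>Pow W. \<Sum>V\<in>Pow U. (-1) ^ (card U - card V) * g V) = g W"
proof -
  have card_le: "card V \<le> card U" if "V \<subseteq> U" "U \<subseteq> W" for U V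
    using that assms by (meson card_mono finite_subset)
  have "(\<Sum>U\<in>Pow W. \<Sum>V\<in>Pow U. (-1) ^ (card U - card V) * g V)
      = (\<Sum>U\<in>Pow W. \<Sum>V | V \<in> Pow W \<and> V \<subseteq> U. (-1) ^ card U * ((-1) ^ card V * g V))"
    by (intro sum.cong) (auto simp: neg_one_power_diff card_le mult.assoc intro: arg_cong[where f = "sum _"])
  also have "\<dots> = (\<Sum>V\<in>Pow W. (\<Sum>U | U \<in> Pow W \<and> V \<subseteq> U. (-1) ^ card U) * ((-1) ^ card V * g V))"
    by (subst sum.swap_restrict) (use assms in \<open>auto simp: sum_distrib_right\<close>)
  also have "\<dots> = (\<Sum>V\<in>Pow W. if V = W then g W else 0)"
  proof (rule sum.cong[OF refl])
    fix V assume "V \<in> Pow W"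
    then have "(\<Sum>U | U \<in> Pow W \<and> V \<subseteq> U. (-1::'b) ^ card U) = (if V = W then (-1) ^ card W else 0)"
      using sum_supersets_neg_one_power[OF assms, of V] by (simp add: conj_commute)
    then show "(\<Sum>U | U \<in> Pow W \<and> V \<subseteq> U. (-1) ^ card U) * ((-1) ^ card V * g V) = (if V = W then g W else 0)"
      by (simp add: mult.assoc[symmetric] power_add[symmetric])
  qed
  also have "\<dots> = g W" using assms by (simp add: sum.delta')
  finally show ?thesis .
qed

lemma indicator_eq_sum_supersets:
  assumes "finite I" "R \<subseteq> I"
  shows "(if R = I then 1 else 0)
    = (\<Sum>S\<in>Pow I. if R \<subseteq> S then (-1::'b::comm_ring_1) ^ (card I - card S) else 0)"
proof -
  have "(\<Sum>S\<in>Pow I. if R \<subseteq> S then (-1::'b) ^ (card I - card S) else 0)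
      = (\<Sum>S | R \<subseteq> S \<and> S \<subseteq> I. (-1) ^ (card I - card S))"
    using assms(1) by (simp add: sum.inter_filter[symmetric] conj_commute)
  also have "\<dots> = (\<Sum>S | R \<subseteq> S \<and> S \<subseteq> I. (-1) ^ card I * (-1) ^ card S)"
    using assms(1) by (intro sum.cong refl) (simp add: neg_one_power_diff card_mono)
  also have "\<dots> = (-1) ^ card I * (if R = I then (-1) ^ card I else 0)"
    by (simp add: sum_distrib_left[symmetric] sum_supersets_neg_one_power[OF assms])
  also have "\<dots> = (if R = I then 1 else 0)"
    by (simp flip: power_mult_distrib)
  finally show ?thesis by simp
qed

lemma covering_indicator_eq_sum:
  assumes "finite I" "finite J" "U \<subseteq> I \<times> J"
  shows "(if fst ` U = I \<and> snd ` U = J then 1 else 0)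
    = (\<Sum>S\<in>Pow I. \<Sum>T\<in>Pow J. if U \<subseteq> S \<times> T
         then (-1::'b::comm_ring_1) ^ (card I - card S) * (-1) ^ (card J - card T) else 0)"
proof -
  have "fst ` U \<subseteq> I" "snd ` U \<subseteq> J" using assms(3) by auto
  have "(if fst ` U = I \<and> snd ` U = J then 1 else 0)
      = (if fst ` U = I then 1 else 0) * (if snd ` U = J then (1::'b) else 0)"
    by simp
  also have "\<dots> = (\<Sum>S\<in>Pow I. if fst ` U \<subseteq> S then (-1) ^ (card I - card S) else 0)
      * (\<Sum>T\<in>Pow J. if snd ` U \<subseteq> T then (-1) ^ (card J - card T) else 0)"
    by (simp only: indicator_eq_sum_supersets[OF assms(1) \<open>fst ` U \<subseteq> I\<close>]
        indicator_eq_sum_supersets[OF assms(2) \<open>snd ` U \<subseteq> J\<close>])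
  also have "\<dots> = (\<Sum>S\<in>Pow I. \<Sum>T\<in>Pow J. (if fst ` U \<subseteq> S then (-1) ^ (card I - card S) else 0)
      * (if snd ` U \<subseteq> T then (-1) ^ (card J - card T) else 0))"
    by (rule sum_product)
  also have "\<dots> = (\<Sum>S\<in>Pow I. \<Sum>T\<in>Pow J. if U \<subseteq> S \<times> T
         then (-1) ^ (card I - card S) * (-1) ^ (card J - card T) else 0)"
    by (intro sum.cong refl) (auto simp: subset_iff)
  finally show ?thesis .
qed

lemma sum_covering_subsets:
  fixes g :: "('i \<times> 'j) set \<Rightarrow> 'b::comm_ring_1"
  assumes "finite I" "finite J" "R \<subseteq> I \<times> J"
  shows "(\<Sum>U | U \<subseteq> R \<and> fst ` U = I \<and> snd ` U = J. \<Sum>V\<in>Pow U. (-1) ^ (card U - card V) * g V)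
    = (\<Sum>S\<in>Pow I. \<Sum>T\<in>Pow J. (-1) ^ (card I - card S) * (-1) ^ (card J - card T) * g (R \<inter> S \<times> T))"
proof -
  define F where "F U = (\<Sum>V\<in>Pow U. (-1) ^ (card U - card V) * g V)" for U
  define sign where "sign (S::'i set) (T::'j set) = (-1::'b) ^ (card I - card S) * (-1) ^ (card J - card T)" for S T
  have "finite R" using assms finite_subset by blast
  have "(\<Sum>U | U \<subseteq> R \<and> fst ` U = I \<and> snd ` U = J. F U)
      = (\<Sum>U\<in>Pow R. (if fst ` U = I \<and> snd ` U = J then 1 else 0) * F U)"
    using sum.inter_filter[of "Pow R" F "\<lambda>U. fst ` U = I \<and> snd ` U = J"] \<open>finite R\<close>
    by (simp add: conj_assoc) (rule sum.cong; simp)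
  also have "\<dots> = (\<Sum>U\<in>Pow R. \<Sum>S\<in>Pow I. \<Sum>T\<in>Pow J. if U \<subseteq> S \<times> T then sign S T * F U else 0)"
  proof (rule sum.cong[OF refl])
    fix U assume "U \<in> Pow R"
    then have "U \<subseteq> I \<times> J" using assms(3) by blast
    then show "(if fst ` U = I \<and> snd ` U = J then 1 else 0) * F U
        = (\<Sum>S\<in>Pow I. \<Sum>T\<in>Pow J. if U \<subseteq> S \<times> T then sign S T * F U else 0)"
      unfolding covering_indicator_eq_sum[OF assms(1,2) \<open>U \<subseteq> I \<times> J\<close>] sign_def sum_distrib_right
      by (intro sum.cong refl) simp
  qed
  also have "\<dots> = (\<Sum>S\<in>Pow I. \<Sum>T\<in>Pow J. \<Sum>U\<in>Pow R. if U \<subseteq> S \<times> T then sign S T * F U else 0)"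
    by (subst sum.swap) (rule sum.cong[OF refl], rule sum.swap)
  also have "\<dots> = (\<Sum>S\<in>Pow I. \<Sum>T\<in>Pow J. sign S T * g (R \<inter> S \<times> T))"
  proof (intro sum.cong refl)
    fix S T
    have "{U \<in> Pow R. U \<subseteq> S \<times> T} = Pow (R \<inter> S \<times> T)" by auto
    then have "(\<Sum>U\<in>Pow R. if U \<subseteq> S \<times> T then sign S T * F U else 0)
        = sign S T * (\<Sum>U\<in>Pow (R \<inter> S \<times> T). F U)"
      using \<open>finite R\<close> by (simp add: sum.inter_filter[symmetric] sum_distrib_left)
    also have "\<dots> = sign S T * g (R \<inter> S \<times> T)"
      unfolding F_def using \<open>finite R\<close> by (subst sum_Pow_Moebius) auto
    finally show "(\<Sum>U\<in>Pow R. if U \<subseteq> S \<times> T then sign S T * F U else 0) = sign S T * g (R \<inter> S \<times> T)" .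
  qed
  finally show ?thesis unfolding F_def sign_def .
qed

section \<open>Mazes as difference operators\<close>

definition smul :: "'b::comm_ring_1 \<Rightarrow> ('x \<Rightarrow> 'b) \<Rightarrow> 'x \<Rightarrow> 'b" where
  "smul a g = (\<lambda>z. a * g z)"

lemma smul_add: "smul a (x + y) = smul a x + smul a y"
  by (auto simp: smul_def algebra_simps)

lemma smul_sum: "smul a (\<Sum>i\<in>S. f i) = (\<Sum>i\<in>S. smul a (f i))"
proof (induction S rule: infinite_finite_induct)
  case (insert x F)
  then show ?case by (simp only: sum.insert[OF insert.hyps] smul_add insert.IH)
qed (auto simp: smul_def)

lemma smul_0 [simp]: "smul 0 g = 0"
  by (auto simp: smul_def)

lemma smul_add_one: "smul (a + 1) g = smul a g + g"
  by (auto simp: smul_def algebra_simps)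

text \<open>Reading \<open>v\<close> as a matrix indexed by \<open>'a\<close>, the passage \<open>x \<rightarrow> y\<close> with label \<open>a\<close> acts
  as left multiplication by \<open>a E\<^sub>x\<^sub>y\<close>; hence composable passages multiply.\<close>
definition passage_act :: "('a \<times> 'a \<times> 'b::comm_ring_1) \<Rightarrow> ('a \<times> 'a \<Rightarrow> 'b) \<Rightarrow> 'a \<times> 'a \<Rightarrow> 'b" where
  "passage_act p v = (\<lambda>z. if fst z = fst p then snd (snd p) * v (fst (snd p), snd z) else 0)"

lemma passage_act_add: "passage_act p (v + w) = passage_act p v + passage_act p w"
  by (auto simp: passage_act_def algebra_simps)

lemma passage_act_sum: "passage_act p (\<Sum>i\<in>S. f i) = (\<Sum>i\<in>S. passage_act p (f i))"
proof (induction S rule: infinite_finite_induct)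
  case (insert x F)
  then show ?case by (simp only: sum.insert[OF insert.hyps] passage_act_add insert.IH)
qed (auto simp: passage_act_def)

lemma passage_act_smul: "passage_act p (smul a v) = smul a (passage_act p v)"
  by (auto simp: passage_act_def smul_def algebra_simps)

lemma passage_act_passage_act:
  "passage_act q (passage_act p v) =
    (if fst p = fst (snd q) then passage_act (fst q, fst (snd p), snd (snd p) * snd (snd q)) v else 0)"
  by (auto simp: passage_act_def algebra_simps)

lemma passage_act_label: "passage_act (x, y, a) v = smul a (passage_act (x, y, 1) v)"
  by (auto simp: passage_act_def smul_def)

lemma passage_act_label_0: "passage_act (x, y, 0) v = 0"
  by (auto simp: passage_act_def)

lemma passage_act_label_add: "passage_act (x, y, a + b) v = passage_act (x, y, a) v + passage_act (x, y, b) v"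
  by (auto simp: passage_act_def algebra_simps)

definition maze_diff :: "('a, 'b::comm_ring_1) maze \<Rightarrow> (('a \<times> 'a \<Rightarrow> 'b) \<Rightarrow> 'b) \<Rightarrow> ('a \<times> 'a \<Rightarrow> 'b) \<Rightarrow> 'b" where
  "maze_diff M \<phi> v = multi_diff (\<lambda>p. passage_act p v) M \<phi> 0"

lemma maze_diff_sum:
  "finite I \<Longrightarrow> maze_diff P (\<lambda>u. \<Sum>i\<in>I. c i * F i u) v = (\<Sum>i\<in>I. c i * maze_diff P (F i) v)"
  unfolding maze_diff_def by (simp add: multi_diff_sum multi_diff_scale)

lemma maze_diff_zero: "maze_diff P (\<lambda>u. 0) v = 0"
  unfolding maze_diff_def by (simp add: multi_diff_zero)

lemma mset_eq_image_mset_nth: "mset xs = image_mset (nth xs) (mset_set {..<length xs})"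
proof -
  have "mset xs = mset (map (nth xs) [0..<length xs])" by (simp add: map_nth)
  also have "\<dots> = image_mset (nth xs) (mset_set {..<length xs})" by (simp add: atLeast0LessThan)
  finally show ?thesis .
qed

lemma maze_diff_mset:
  "maze_diff (mset ps) \<phi> v =
    (\<Sum>S\<in>Pow {..<length ps}. (-1) ^ (length ps - card S) * \<phi> (\<Sum>i\<in>S. passage_act (ps ! i) v))"
  unfolding maze_diff_def by (subst mset_eq_image_mset_nth) (simp add: multi_diff_mset_set)

lemma mset_some_mset: "mset (SOME ps. mset ps = P) = P"
  using someI_ex[OF ex_mset[of P]] .

lemma comp_pairs_subset: "comp_pairs ps qs \<subseteq> {..<length ps} \<times> {..<length qs}"
  by (auto simp: comp_pairs_def)

lemma finite_comp_pairs: "finite (comp_pairs ps qs)"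
  using comp_pairs_subset finite_subset by blast

lemma finite_comp_subsets: "finite (comp_subsets ps qs)"
proof -
  have "comp_subsets ps qs \<subseteq> Pow (comp_pairs ps qs)" by (auto simp: comp_subsets_def)
  then show ?thesis using finite_comp_pairs finite_subset by blast
qed

lemma comp_maze_eq:
  assumes "ps = (SOME ps. mset ps = P)" "qs = (SOME qs. mset qs = Q)"
  shows "comp_maze P Q M = of_nat (card {U \<in> comp_subsets ps qs. maze_of ps qs U = M})"
  by (simp add: comp_maze_def assms Let_def)

lemma supp_comp_maze:
  assumes "ps = (SOME ps. mset ps = P)" "qs = (SOME qs. mset qs = Q)"
  shows "supp (comp_maze P Q) \<subseteq> maze_of ps qs ` comp_subsets ps qs"
proof
  fix M assume "M \<in> supp (comp_maze P Q)"
  then have "{U \<in> comp_subsets ps qs. maze_of ps qs U = M} \<noteq> {}"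
    by (auto simp: supp_def comp_maze_eq[OF assms] simp del: Collect_empty_eq)
  then show "M \<in> maze_of ps qs ` comp_subsets ps qs" by blast
qed

lemma finite_supp_comp_maze: "finite (supp (comp_maze P Q))"
  using supp_comp_maze[OF refl refl] finite_comp_subsets finite_subset by blast

lemma sum_supp_comp_maze:
  assumes "ps = (SOME ps. mset ps = P)" "qs = (SOME qs. mset qs = Q)"
  shows "(\<Sum>M\<in>supp (comp_maze P Q). comp_maze P Q M * G M) = (\<Sum>U\<in>comp_subsets ps qs. G (maze_of ps qs U))"
proof -
  let ?CS = "comp_subsets ps qs" and ?mo = "maze_of ps qs"
  have "(\<Sum>M\<in>supp (comp_maze P Q). comp_maze P Q M * G M) = (\<Sum>M\<in>?mo ` ?CS. comp_maze P Q M * G M)"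
    using supp_comp_maze[OF assms] finite_comp_subsets
    by (intro sum.mono_neutral_left) (auto simp: supp_def)
  also have "\<dots> = (\<Sum>M\<in>?mo ` ?CS. \<Sum>U\<in>{U \<in> ?CS. ?mo U = M}. G (?mo U))"
    by (intro sum.cong refl) (simp add: comp_maze_eq[OF assms])
  also have "\<dots> = (\<Sum>U\<in>?CS. G (?mo U))"
    by (rule sum.image_gen[symmetric]) (rule finite_comp_subsets)
  finally show ?thesis .
qed

lemma sum_passage_act_sum:
  assumes "S \<subseteq> {..<length ps}" "T \<subseteq> {..<length qs}"
  shows "(\<Sum>j\<in>T. passage_act (qs ! j) (\<Sum>i\<in>S. passage_act (ps ! i) v))
       = (\<Sum>(i, j)\<in>comp_pairs ps qs \<inter> S \<times> T.
            passage_act (fst (qs ! j), fst (snd (ps ! i)), snd (snd (ps ! i)) * snd (snd (qs ! j))) v)"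
proof -
  let ?c = "\<lambda>(i, j). passage_act (fst (qs ! j), fst (snd (ps ! i)), snd (snd (ps ! i)) * snd (snd (qs ! j))) v"
  have "finite S" "finite T" using assms finite_subset by auto
  have "(\<Sum>j\<in>T. passage_act (qs ! j) (\<Sum>i\<in>S. passage_act (ps ! i) v))
      = (\<Sum>(i, j)\<in>S \<times> T. passage_act (qs ! j) (passage_act (ps ! i) v))"
    by (simp add: passage_act_sum sum.cartesian_product[symmetric] sum.swap[of _ T])
  also have "\<dots> = (\<Sum>x\<in>S \<times> T. if x \<in> comp_pairs ps qs then ?c x else 0)"
    using assms by (intro sum.cong refl) (auto simp: passage_act_passage_act comp_pairs_def)
  also have "\<dots> = (\<Sum>x\<in>comp_pairs ps qs \<inter> S \<times> T. ?c x)"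
    by (subst Int_commute) (rule sum.inter_restrict[symmetric], simp add: \<open>finite S\<close> \<open>finite T\<close>)
  finally show ?thesis .
qed

text \<open>Both sides expand, by inclusion--exclusion, into the same alternating sum over pairs
  \<open>S \<times> T\<close> of sets of passage occurrences.\<close>
lemma maze_diff_comp_maze:
  "(\<Sum>M\<in>supp (comp_maze P Q). comp_maze P Q M * maze_diff M \<phi> v) = maze_diff P (\<lambda>u. maze_diff Q \<phi> u) v"
proof -
  define ps where "ps = (SOME ps. mset ps = P)"
  define qs where "qs = (SOME qs. mset qs = Q)"
  define I where "I = {..<length ps}"
  define J where "J = {..<length qs}"
  define CP where "CP = comp_pairs ps qs"
  define c where "c = (\<lambda>(i, j). (fst (qs ! j), fst (snd (ps ! i)), snd (snd (ps ! i)) * snd (snd (qs ! j))))"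
  define g where "g V = \<phi> (\<Sum>u\<in>V. passage_act (c u) v)" for V
  have P: "P = mset ps" and Q: "Q = mset qs" unfolding ps_def qs_def by (simp_all add: mset_some_mset)
  have "CP \<subseteq> I \<times> J" unfolding CP_def I_def J_def by (rule comp_pairs_subset)
  have "(\<Sum>M\<in>supp (comp_maze P Q). comp_maze P Q M * maze_diff M \<phi> v)
      = (\<Sum>U\<in>comp_subsets ps qs. maze_diff (maze_of ps qs U) \<phi> v)"
    by (rule sum_supp_comp_maze[OF ps_def qs_def])
  also have "\<dots> = (\<Sum>U | U \<subseteq> CP \<and> fst ` U = I \<and> snd ` U = J. \<Sum>V\<in>Pow U. (-1) ^ (card U - card V) * g V)"
  proof -
    have CS: "comp_subsets ps qs = {U. U \<subseteq> CP \<and> fst ` U = I \<and> snd ` U = J}"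
      unfolding comp_subsets_def CP_def I_def J_def ..
    have "maze_diff (maze_of ps qs U) \<phi> v = (\<Sum>V\<in>Pow U. (-1) ^ (card U - card V) * g V)" if "finite U" for U
      using that by (simp add: maze_diff_def maze_of_def multi_diff_mset_set g_def c_def)
    moreover have "finite U" if "U \<subseteq> CP" for U
      using that finite_comp_pairs finite_subset unfolding CP_def by blast
    ultimately show ?thesis unfolding CS by (intro sum.cong refl) simp
  qed
  also have "\<dots> = (\<Sum>S\<in>Pow I. \<Sum>T\<in>Pow J. (-1) ^ (card I - card S) * (-1) ^ (card J - card T) * g (CP \<inter> S \<times> T))"
    by (rule sum_covering_subsets[OF _ _ \<open>CP \<subseteq> I \<times> J\<close>]) (simp_all add: I_def J_def)
  also have "\<dots> = maze_diff P (\<lambda>u. maze_diff Q \<phi> u) v"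
    unfolding P Q maze_diff_mset sum_distrib_left I_def J_def
  proof (intro sum.cong refl)
    fix S T assume "S \<in> Pow {..<length ps}" "T \<in> Pow {..<length qs}"
    then show "(-1) ^ (card {..<length ps} - card S) * (-1) ^ (card {..<length qs} - card T) * g (CP \<inter> S \<times> T)
      = (-1) ^ (length ps - card S) * ((-1) ^ (length qs - card T)
         * \<phi> (\<Sum>j\<in>T. passage_act (qs ! j) (\<Sum>i\<in>S. passage_act (ps ! i) v)))"
      using sum_passage_act_sum[of S ps T qs v]
      by (simp add: g_def c_def CP_def case_prod_unfold mult.assoc)
  qed
  finally show ?thesis .
qed

lemma trivial_ring_eq:
  fixes x y :: "'b::comm_ring_1"
  assumes "(1::'b) = 0"
  shows "x = y"
  by (metis assms mult_1_right mult_zero_right)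

lemma supp_add_subset: "supp (\<lambda>m. a m + b m) \<subseteq> supp a \<union> supp (b :: 'm \<Rightarrow> 'b::comm_ring_1)"
  by (auto simp: supp_def)

lemma supp_smult_subset: "supp (\<lambda>m. c * a m) \<subseteq> supp (a :: 'm \<Rightarrow> 'b::comm_ring_1)"
  by (auto simp: supp_def)

lemma finite_supp_delta: "finite (supp (delta M :: _ \<Rightarrow> 'b::comm_ring_1))"
  by (rule finite_subset[of _ "{M}"]) (auto simp: supp_def delta_def)

lemma finite_supp_add:
  "finite (supp a) \<Longrightarrow> finite (supp b) \<Longrightarrow> finite (supp (\<lambda>m. a m + b m :: 'b::comm_ring_1))"
  by (rule finite_subset[OF supp_add_subset]) simp

lemma finite_supp_smult: "finite (supp a) \<Longrightarrow> finite (supp (\<lambda>m. c * a m :: 'b::comm_ring_1))"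
  by (rule finite_subset[OF supp_smult_subset])

lemma finite_supp_diff:
  "finite (supp a) \<Longrightarrow> finite (supp b) \<Longrightarrow> finite (supp (\<lambda>m. a m - b m :: 'b::comm_ring_1))"
  using finite_supp_add[of a "\<lambda>m. (-1) * b m"] finite_supp_smult[of b "-1"] by simp

lemma finite_supp_sum:
  "finite I \<Longrightarrow> (\<And>i. i \<in> I \<Longrightarrow> finite (supp (f i))) \<Longrightarrow> finite (supp (\<lambda>m. \<Sum>i\<in>I. f i m :: 'b::comm_ring_1))"
proof (induction I rule: finite_induct)
  case (insert x F)
  then show ?case using finite_supp_add[of "f x" "\<lambda>m. \<Sum>i\<in>F. f i m"] by simp
qed (simp add: supp_def)

lemma lspan_sum: "finite I \<Longrightarrow> (\<And>i. i \<in> I \<Longrightarrow> f i \<in> lspan G) \<Longrightarrow> (\<lambda>m. \<Sum>i\<in>I. f i m) \<in> lspan G"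
  by (induction I rule: finite_induct) (auto intro: lspan.zero lspan.add[of _ G "\<lambda>m. \<Sum>i\<in>_. f i m"])

definition lin_maze_diff :: "(('a, 'b::comm_ring_1) maze \<Rightarrow> 'b) \<Rightarrow> (('a \<times> 'a \<Rightarrow> 'b) \<Rightarrow> 'b) \<Rightarrow> ('a \<times> 'a \<Rightarrow> 'b) \<Rightarrow> 'b" where
  "lin_maze_diff f \<phi> v = (\<Sum>M\<in>supp f. f M * maze_diff M \<phi> v)"

lemma sum_supp_eq_sum_superset:
  "finite S \<Longrightarrow> supp f \<subseteq> S \<Longrightarrow> (\<Sum>M\<in>supp f. f M * G M) = (\<Sum>M\<in>S. f M * G M :: 'b::comm_ring_1)"
  by (rule sum.mono_neutral_left) (auto simp: supp_def)

lemma lin_maze_diff_superset: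
  "finite S \<Longrightarrow> supp f \<subseteq> S \<Longrightarrow> lin_maze_diff f \<phi> v = (\<Sum>M\<in>S. f M * maze_diff M \<phi> v)"
  unfolding lin_maze_diff_def by (rule sum_supp_eq_sum_superset)

lemma lin_maze_diff_add:
  assumes "finite (supp a)" "finite (supp b)"
  shows "lin_maze_diff (\<lambda>m. a m + b m) \<phi> v = lin_maze_diff a \<phi> v + lin_maze_diff b \<phi> v"
proof -
  let ?S = "supp a \<union> supp b"
  have "finite ?S" using assms by simp
  then show ?thesis
    using lin_maze_diff_superset[of ?S a] lin_maze_diff_superset[of ?S b]
      lin_maze_diff_superset[OF _ supp_add_subset, of a b]
    by (simp add: distrib_right sum.distrib)
qed

lemma lin_maze_diff_smult:
  "finite (supp a) \<Longrightarrow> lin_maze_diff (\<lambda>m. c * a m) \<phi> v = c * lin_maze_diff a \<phi> v"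
  using lin_maze_diff_superset[OF _ supp_smult_subset, of a c]
  by (simp add: lin_maze_diff_def sum_distrib_left mult.assoc)

lemma lin_maze_diff_diff:
  assumes "finite (supp a)" "finite (supp b)"
  shows "lin_maze_diff (\<lambda>m. a m - b m) \<phi> v = lin_maze_diff a \<phi> v - lin_maze_diff b \<phi> v"
  using lin_maze_diff_add[OF assms(1) finite_supp_smult[OF assms(2), of "-1"]]
    lin_maze_diff_smult[OF assms(2), of "-1"]
  by simp

lemma lin_maze_diff_zero: "lin_maze_diff (\<lambda>m. 0) \<phi> v = 0"
  by (simp add: lin_maze_diff_def supp_def)

lemma lin_maze_diff_sum:
  "finite I \<Longrightarrow> (\<And>i. i \<in> I \<Longrightarrow> finite (supp (f i))) \<Longrightarrow>
    lin_maze_diff (\<lambda>m. \<Sum>i\<in>I. f i m) \<phi> v = (\<Sum>i\<in>I. lin_maze_diff (f i) \<phi> v)"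
proof (induction I rule: finite_induct)
  case (insert x F)
  then have "lin_maze_diff (\<lambda>m. f x m + (\<Sum>i\<in>F. f i m)) \<phi> v
      = lin_maze_diff (f x) \<phi> v + lin_maze_diff (\<lambda>m. \<Sum>i\<in>F. f i m) \<phi> v"
    by (intro lin_maze_diff_add finite_supp_sum) auto
  then show ?case using insert by simp
qed (simp add: lin_maze_diff_zero)

lemma lin_maze_diff_delta:
  fixes M :: "('a, 'b::comm_ring_1) maze"
  shows "lin_maze_diff (delta M) \<phi> v = maze_diff M \<phi> v"
proof (cases "(1::'b) = 0")
  case False
  then have "supp (delta M :: _ \<Rightarrow> 'b) = {M}" by (auto simp: supp_def delta_def)
  then show ?thesis by (simp add: lin_maze_diff_def delta_def)
qed (rule trivial_ring_eq)

lemma supp_comp_subset: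
  "supp (comp f g) \<subseteq> (\<Union>P\<in>supp f. \<Union>Q\<in>supp g. supp (comp_maze P Q))"
proof
  fix M assume "M \<in> supp (comp f g)"
  then have "(\<Sum>P\<in>supp f. \<Sum>Q\<in>supp g. f P * g Q * comp_maze P Q M) \<noteq> 0"
    by (simp add: supp_def comp_def)
  then obtain P Q where "P \<in> supp f" "Q \<in> supp g" "comp_maze P Q M \<noteq> 0"
    by (metis (no_types, lifting) mult_zero_right sum.neutral)
  then show "M \<in> (\<Union>P\<in>supp f. \<Union>Q\<in>supp g. supp (comp_maze P Q))"
    by (auto simp: supp_def)
qed

lemma finite_supp_comp:
  assumes "finite (supp f)" "finite (supp g)"
  shows "finite (supp (comp f g))"
  by (rule finite_subset[OF supp_comp_subset]) (use assms finite_supp_comp_maze in blast)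

lemma lin_maze_diff_comp:
  assumes "finite (supp f)" "finite (supp g)"
  shows "lin_maze_diff (comp f g) \<phi> v = lin_maze_diff f (\<lambda>u. lin_maze_diff g \<phi> u) v"
proof -
  define S where "S = (\<Union>P\<in>supp f. \<Union>Q\<in>supp g. supp (comp_maze P Q))"
  have "finite S" unfolding S_def using assms finite_supp_comp_maze by blast
  have "supp (comp f g) \<subseteq> S"
    unfolding S_def by (rule supp_comp_subset)
  have "lin_maze_diff (comp f g) \<phi> v = (\<Sum>M\<in>S. comp f g M * maze_diff M \<phi> v)"
    by (rule lin_maze_diff_superset[OF \<open>finite S\<close> \<open>supp (comp f g) \<subseteq> S\<close>])
  also have "\<dots> = (\<Sum>P\<in>supp f. \<Sum>Q\<in>supp g. f P * g Q * (\<Sum>M\<in>S. comp_maze P Q M * maze_diff M \<phi> v))"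
    unfolding comp_def sum_distrib_right sum_distrib_left
    by (subst sum.swap) (simp add: sum.swap[of _ S] mult.assoc)
  also have "\<dots> = (\<Sum>P\<in>supp f. \<Sum>Q\<in>supp g. f P * g Q * maze_diff P (\<lambda>u. maze_diff Q \<phi> u) v)"
  proof (intro sum.cong refl)
    fix P Q assume "P \<in> supp f" "Q \<in> supp g"
    then have "supp (comp_maze P Q) \<subseteq> S" unfolding S_def by blast
    then show "f P * g Q * (\<Sum>M\<in>S. comp_maze P Q M * maze_diff M \<phi> v)
        = f P * g Q * maze_diff P (\<lambda>u. maze_diff Q \<phi> u) v"
      by (simp add: sum_supp_eq_sum_superset[OF \<open>finite S\<close>, symmetric] maze_diff_comp_maze)
  qed
  also have "\<dots> = lin_maze_diff f (\<lambda>u. lin_maze_diff g \<phi> u) v"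
    unfolding lin_maze_diff_def using assms(2) by (simp add: maze_diff_sum sum_distrib_left mult.assoc)
  finally show ?thesis .
qed

definition id_maze :: "'a set \<Rightarrow> ('a, 'b::comm_ring_1) maze" where
  "id_maze Y = mset_set ((\<lambda>y. (y, y, 1)) ` Y)"

lemma comp_subsets_eq_singleton:
  assumes "fst ` comp_pairs ps qs = {..<length ps}" "snd ` comp_pairs ps qs = {..<length qs}"
    and "inj_on h (comp_pairs ps qs)" "h = fst \<or> h = snd"
  shows "comp_subsets ps qs = {comp_pairs ps qs}"
proof -
  have "U = comp_pairs ps qs" if "U \<in> comp_subsets ps qs" for U
  proof -
    from that have "U \<subseteq> comp_pairs ps qs" "fst ` U = {..<length ps}" "snd ` U = {..<length qs}"
      by (auto simp: comp_subsets_def)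
    moreover from calculation have "h ` U = h ` comp_pairs ps qs"
      using assms(1,2,4) by (elim disjE) simp_all
    ultimately show ?thesis using inj_on_image_eq_iff[OF assms(3)] by blast
  qed
  then show ?thesis using assms(1,2) by (auto simp: comp_subsets_def)
qed

lemma image_mset_mset_set_eq_mset:
  assumes "finite A" "inj_on h A" "h ` A = {..<length xs}" "\<And>a. a \<in> A \<Longrightarrow> c a = xs ! h a"
  shows "image_mset c (mset_set A) = mset xs"
proof -
  have "image_mset c (mset_set A) = image_mset (\<lambda>a. xs ! h a) (mset_set A)"
    using assms(1,4) by (intro image_mset_cong) simp
  also have "\<dots> = image_mset (nth xs) (image_mset h (mset_set A))"
    by (simp add: image_mset.compositionality o_def)
  also have "\<dots> = mset xs"
    using assms(2,3) by (simp add: image_mset_mset_set mset_eq_image_mset_nth[symmetric])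
  finally show ?thesis .
qed

text \<open>\<open>comp_maze\<close> enumerates the passages by \<open>SOME\<close>, so the hypothesis has to
  hold for every enumeration.\<close>
lemma comp_maze_eq_delta:
  assumes "\<And>ps qs. mset ps = P \<Longrightarrow> mset qs = Q \<Longrightarrow>
    comp_subsets ps qs = {comp_pairs ps qs} \<and> maze_of ps qs (comp_pairs ps qs) = M"
  shows "comp_maze P Q = delta M"
proof
  fix M'
  have "card {U \<in> {comp_pairs ps qs}. maze_of ps qs U = M'} = (if maze_of ps qs (comp_pairs ps qs) = M' then 1 else 0)"
    for ps qs :: "('a \<times> 'a \<times> 'b) list"
    by (simp add: Collect_conv_if)
  then show "comp_maze P Q M' = delta M M'"
    using assms[OF mset_some_mset mset_some_mset] by (auto simp: comp_maze_def delta_def Let_def)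
qed

lemma mset_eq_mset_set:
  assumes "finite A" "mset xs = mset_set A"
  shows "distinct xs" "set xs = A"
proof -
  show "set xs = A" using assms by (metis finite_set_mset_mset_set set_mset_mset)
  then show "distinct xs"
    using assms unfolding distinct_count_atmost_1 by (simp add: count_mset_set')
qed

lemma comp_pairs_id_maze_left:
  assumes "finite Y" "mset ps = (id_maze Y :: ('a, 'b::comm_ring_1) maze)" "tgts (mset qs) = Y"
  shows "fst ` comp_pairs ps qs = {..<length ps}" "snd ` comp_pairs ps qs = {..<length qs}"
    and "inj_on snd (comp_pairs ps qs)"
    and "x \<in> comp_pairs ps qs \<Longrightarrow> ps ! fst x = (fst (snd (qs ! snd x)), fst (snd (qs ! snd x)), 1)"
proof -
  note ps_enum = mset_eq_mset_set[OF finite_imageI[OF assms(1)] assms(2)[unfolded id_maze_def]]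
  have diag: "\<exists>y\<in>Y. ps ! i = (y, y, 1)" if "i < length ps" for i
    using nth_mem[OF that] ps_enum(2) by auto
  show "fst ` comp_pairs ps qs = {..<length ps}"
  proof (intro equalityI subsetI)
    fix i assume "i \<in> {..<length ps}"
    then obtain y where "y \<in> Y" "ps ! i = (y, y, 1)" using diag by auto
    then obtain j where "j < length qs" "fst (snd (qs ! j)) = y"
      using assms(3) by (auto simp: tgts_def in_set_conv_nth)
    then show "i \<in> fst ` comp_pairs ps qs" using \<open>i \<in> {..<length ps}\<close> \<open>ps ! i = (y, y, 1)\<close>
      by (force simp: comp_pairs_def)
  qed (auto simp: comp_pairs_def)
  show "snd ` comp_pairs ps qs = {..<length qs}"
  proof (intro equalityI subsetI)
    fix j assume "j \<in> {..<length qs}"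
    then have "fst (snd (qs ! j)) \<in> Y" using nth_mem assms(3) by (force simp: tgts_def)
    then obtain i where "i < length ps" "ps ! i = (fst (snd (qs ! j)), fst (snd (qs ! j)), 1)"
      using ps_enum(2) by (metis (no_types, lifting) image_eqI in_set_conv_nth)
    then show "j \<in> snd ` comp_pairs ps qs" using \<open>j \<in> {..<length qs}\<close> by (force simp: comp_pairs_def)
  qed (auto simp: comp_pairs_def)
  show pair: "ps ! fst x = (fst (snd (qs ! snd x)), fst (snd (qs ! snd x)), 1)"
    if "x \<in> comp_pairs ps qs" for x
  proof -
    have "fst x < length ps" "fst (ps ! fst x) = fst (snd (qs ! snd x))"
      using that by (auto simp: comp_pairs_def)
    then show ?thesis using diag by fastforce
  qed
  show "inj_on snd (comp_pairs ps qs)"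
  proof (rule inj_onI)
    fix x x' assume x: "x \<in> comp_pairs ps qs" "x' \<in> comp_pairs ps qs" "snd x = snd x'"
    then have "ps ! fst x = ps ! fst x'" "fst x < length ps" "fst x' < length ps"
      using pair by (auto simp: comp_pairs_def)
    then have "fst x = fst x'" using ps_enum(1) by (simp add: nth_eq_iff_index_eq)
    then show "x = x'" using x(3) by (simp add: prod_eq_iff)
  qed
qed

lemma comp_pairs_id_maze_right:
  assumes "finite X" "mset qs = (id_maze X :: ('a, 'b::comm_ring_1) maze)" "srcs (mset ps) = X"
  shows "fst ` comp_pairs ps qs = {..<length ps}" "snd ` comp_pairs ps qs = {..<length qs}"
    and "inj_on fst (comp_pairs ps qs)"
    and "x \<in> comp_pairs ps qs \<Longrightarrow> qs ! snd x = (fst (ps ! fst x), fst (ps ! fst x), 1)"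
proof -
  note qs_enum = mset_eq_mset_set[OF finite_imageI[OF assms(1)] assms(2)[unfolded id_maze_def]]
  have diag: "\<exists>x\<in>X. qs ! j = (x, x, 1)" if "j < length qs" for j
    using nth_mem[OF that] qs_enum(2) by auto
  show "fst ` comp_pairs ps qs = {..<length ps}"
  proof (intro equalityI subsetI)
    fix i assume "i \<in> {..<length ps}"
    then have "fst (ps ! i) \<in> X" using nth_mem assms(3) by (force simp: srcs_def)
    then obtain j where "j < length qs" "qs ! j = (fst (ps ! i), fst (ps ! i), 1)"
      using qs_enum(2) by (metis (no_types, lifting) image_eqI in_set_conv_nth)
    then show "i \<in> fst ` comp_pairs ps qs" using \<open>i \<in> {..<length ps}\<close> by (force simp: comp_pairs_def)
  qed (auto simp: comp_pairs_def)
  show "snd ` comp_pairs ps qs = {..<length qs}"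
  proof (intro equalityI subsetI)
    fix j assume "j \<in> {..<length qs}"
    then obtain x where "x \<in> X" "qs ! j = (x, x, 1)" using diag by auto
    then obtain i where "i < length ps" "fst (ps ! i) = x"
      using assms(3) by (auto simp: srcs_def in_set_conv_nth)
    then show "j \<in> snd ` comp_pairs ps qs" using \<open>j \<in> {..<length qs}\<close> \<open>qs ! j = (x, x, 1)\<close>
      by (force simp: comp_pairs_def)
  qed (auto simp: comp_pairs_def)
  show pair: "qs ! snd x = (fst (ps ! fst x), fst (ps ! fst x), 1)" if "x \<in> comp_pairs ps qs" for x
  proof -
    have "snd x < length qs" "fst (ps ! fst x) = fst (snd (qs ! snd x))"
      using that by (auto simp: comp_pairs_def)
    then show ?thesis using diag by fastforce
  qed
  show "inj_on fst (comp_pairs ps qs)"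
  proof (rule inj_onI)
    fix x x' assume x: "x \<in> comp_pairs ps qs" "x' \<in> comp_pairs ps qs" "fst x = fst x'"
    then have "qs ! snd x = qs ! snd x'" "snd x < length qs" "snd x' < length qs"
      using pair by (auto simp: comp_pairs_def)
    then have "snd x = snd x'" using qs_enum(1) by (simp add: nth_eq_iff_index_eq)
    then show "x = x'" using x(3) by (simp add: prod_eq_iff)
  qed
qed

lemma comp_maze_id_maze_left:
  fixes M :: "('a, 'b::comm_ring_1) maze"
  assumes "finite Y" "tgts M = Y"
  shows "comp_maze (id_maze Y) M = delta M"
proof (rule comp_maze_eq_delta, intro conjI)
  fix ps qs assume ps: "mset ps = (id_maze Y :: ('a, 'b) maze)" and qs: "mset qs = M"
  have "tgts (mset qs) = Y" using qs assms(2) by simp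
  note CP = comp_pairs_id_maze_left[OF assms(1) ps this]
  show "comp_subsets ps qs = {comp_pairs ps qs}"
    using CP(1-3) by (rule comp_subsets_eq_singleton) simp
  show "maze_of ps qs (comp_pairs ps qs) = M"
    unfolding maze_of_def qs[symmetric]
    by (rule image_mset_mset_set_eq_mset[OF finite_comp_pairs CP(3,2)]) (simp add: CP(4) case_prod_unfold)
qed

lemma comp_maze_id_maze_right:
  fixes M :: "('a, 'b::comm_ring_1) maze"
  assumes "finite X" "srcs M = X"
  shows "comp_maze M (id_maze X) = delta M"
proof (rule comp_maze_eq_delta, intro conjI)
  fix ps qs assume ps: "mset ps = M" and qs: "mset qs = (id_maze X :: ('a, 'b) maze)"
  have "srcs (mset ps) = X" using ps assms(2) by simp
  note CP = comp_pairs_id_maze_right[OF assms(1) qs this]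
  show "comp_subsets ps qs = {comp_pairs ps qs}"
    using CP(1-3) by (rule comp_subsets_eq_singleton) simp
  show "maze_of ps qs (comp_pairs ps qs) = M"
    unfolding maze_of_def ps[symmetric]
    by (rule image_mset_mset_set_eq_mset[OF finite_comp_pairs CP(3,1)]) (simp add: CP(4) case_prod_unfold)
qed

lemma comp_delta_id_maze_left:
  fixes f :: "('a, 'b::comm_ring_1) maze \<Rightarrow> 'b"
  assumes "finite Y" "finite (supp f)" "\<And>M. M \<in> supp f \<Longrightarrow> tgts M = Y"
  shows "comp (delta (id_maze Y)) f = f"
proof (cases "(1::'b) = 0")
  case False
  then have "supp (delta (id_maze Y) :: _ \<Rightarrow> 'b) = {id_maze Y}" by (auto simp: supp_def delta_def)
  show ?thesis
  proof
    fix M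
    have "comp (delta (id_maze Y)) f M = (\<Sum>Q\<in>supp f. f Q * delta Q M)"
      unfolding comp_def \<open>supp (delta (id_maze Y)) = {id_maze Y}\<close>
      using assms by (simp add: comp_maze_id_maze_left delta_def)
    also have "\<dots> = (\<Sum>Q\<in>supp f. if Q = M then f Q else 0)"
      by (rule sum.cong) (auto simp: delta_def)
    also have "\<dots> = f M"
      using assms(2) by (simp add: sum.delta) (simp add: supp_def)
    finally show "comp (delta (id_maze Y)) f M = f M" .
  qed
qed (auto intro: trivial_ring_eq)

lemma comp_delta_id_maze_right:
  fixes f :: "('a, 'b::comm_ring_1) maze \<Rightarrow> 'b"
  assumes "finite X" "finite (supp f)" "\<And>M. M \<in> supp f \<Longrightarrow> srcs M = X"
  shows "comp f (delta (id_maze X)) = f"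
proof (cases "(1::'b) = 0")
  case False
  then have "supp (delta (id_maze X) :: _ \<Rightarrow> 'b) = {id_maze X}" by (auto simp: supp_def delta_def)
  show ?thesis
  proof
    fix M
    have "comp f (delta (id_maze X)) M = (\<Sum>P\<in>supp f. f P * delta P M)"
      unfolding comp_def \<open>supp (delta (id_maze X)) = {id_maze X}\<close>
      using assms by (simp add: comp_maze_id_maze_right delta_def)
    also have "\<dots> = (\<Sum>P\<in>supp f. if P = M then f P else 0)"
      by (rule sum.cong) (auto simp: delta_def)
    also have "\<dots> = f M"
      using assms(2) by (simp add: sum.delta) (simp add: supp_def)
    finally show "comp f (delta (id_maze X)) M = f M" .
  qed
qed (auto intro: trivial_ring_eq)

section \<open>Pure mazes span\<close>

lemma I_d_Cons: "I_d (p # ps) (d # ds) = replicate_mset d (fst p, fst (snd p), 1) + I_d ps ds"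
  by (simp add: I_d_def case_prod_beta)

lemma set_mset_I_d:
  "length ds = length ps \<Longrightarrow> (\<forall>k\<in>set ds. k \<ge> 1) \<Longrightarrow>
    set_mset (I_d ps ds) = (\<lambda>p. (fst p, fst (snd p), 1)) ` set ps"
  by (induction ds ps rule: list_induct2) (auto simp: I_d_def I_d_Cons)

lemma size_I_d: "length ds = length ps \<Longrightarrow> size (I_d ps ds) = sum_list ds"
  by (induction ds ps rule: list_induct2) (simp_all add: I_d_def I_d_Cons)

lemma assignments_Nil: "assignments m [] = {[]}"
  by (auto simp: assignments_def)

lemma assignments_Cons:
  "assignments m (p # ps) = (\<lambda>(d, ds). d # ds) ` (SIGMA d:{1..m}. assignments (m - d) ps)"
proof
  show "assignments m (p # ps) \<subseteq> (\<lambda>(d, ds). d # ds) ` (SIGMA d:{1..m}. assignments (m - d) ps)"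
  proof
    fix xs assume xs: "xs \<in> assignments m (p # ps)"
    then obtain d ds where "xs = d # ds" unfolding assignments_def by (cases xs) auto
    with xs show "xs \<in> (\<lambda>(d, ds). d # ds) ` (SIGMA d:{1..m}. assignments (m - d) ps)"
      unfolding assignments_def by force
  qed
qed (auto simp: assignments_def)

lemma finite_assignments: "finite (assignments m ps)"
proof (rule finite_subset)
  show "assignments m ps \<subseteq> {xs. set xs \<subseteq> {..m} \<and> length xs = length ps}"
    by (auto simp: assignments_def dest!: member_le_sum_list)
qed (rule finite_lists_length_eq, simp)

lemma sum_assignments_Cons:
  "(\<Sum>ds\<in>assignments m (p # ps). f ds) = (\<Sum>d\<in>{1..m}. \<Sum>ds\<in>assignments (m - d) ps. f (d # ds))"
proof -
  have "inj_on (\<lambda>(d, ds). d # ds) (SIGMA d:{1..m}. assignments (m - d) ps)"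
    by (auto simp: inj_on_def)
  then show ?thesis
    unfolding assignments_Cons by (simp add: sum.reindex sum.Sigma finite_assignments case_prod_unfold)
qed

lemma I_d_is_pure_maze:
  assumes "is_maze X Y (mset ps)" "ds \<in> assignments n ps"
  shows "is_maze X Y (I_d ps ds) \<and> pure (I_d ps ds) \<and> size (I_d ps ds) \<le> n"
proof -
  have ds: "length ds = length ps" "\<forall>k\<in>set ds. k \<ge> 1" "sum_list ds \<le> n"
    using assms(2) unfolding assignments_def by auto
  note set_I_d = set_mset_I_d[OF ds(1,2)]
  have "srcs (I_d ps ds) = srcs (mset ps)" "tgts (I_d ps ds) = tgts (mset ps)"
    unfolding srcs_def tgts_def set_I_d by (auto simp: image_image)
  then show ?thesis
    using assms(1) ds size_I_d[OF ds(1)] by (auto simp: is_maze_def pure_def set_I_d)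
qed

text \<open>Sandwiched between identity mazes, the relation is itself a generator of the kernel.\<close>
lemma relation_mem_laby_n_kernel:
  fixes r :: "('a, 'b::comm_ring_1) maze \<Rightarrow> 'b"
  assumes "r \<in> laby_rels \<union> rels_III n \<union> rels_IV n" "finite X" "finite Y" "finite (supp r)"
    and "\<And>M. M \<in> supp r \<Longrightarrow> is_maze X Y M"
  shows "r \<in> laby_n_kernel n"
proof -
  have "comp (delta (id_maze Y)) (comp r (delta (id_maze X))) = r"
    using assms(2-5) by (simp add: is_maze_def comp_delta_id_maze_right comp_delta_id_maze_left)
  moreover have "comp (delta (id_maze Y)) (comp r (delta (id_maze X))) \<in> laby_n_kernel n"
    unfolding laby_n_kernel_def using assms(1) by (intro lspan.gen) blast
  ultimately show ?thesis by simp
qed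

text \<open>Relation (IV) itself writes a maze as a combination of pure mazes with at most \<open>n\<close>
  passages.\<close>
lemma delta_eq_pure_combination_plus_kernel:
  fixes P :: "('a, 'b::comm_ring_1) maze"
  assumes "finite X" "finite Y" "is_maze X Y P"
  shows "\<exists>s r. s \<in> lspan (delta ` {Q. is_maze X Y Q \<and> pure Q \<and> size Q \<le> n})
    \<and> r \<in> laby_n_kernel n \<and> delta P = (\<lambda>M. s M + r M)"
proof -
  obtain ps where ps: "mset ps = P" using ex_mset by blast
  define c where "c ds = prod_list (map (\<lambda>(p, k). bin (snd (snd p)) k) (zip ps ds))" for ds
  define s where "s M = (\<Sum>ds\<in>assignments n ps. c ds * delta (I_d ps ds) M)" for M
  define r where "r M = delta (mset ps) M - s M" for M
  have I_d: "is_maze X Y (I_d ps ds) \<and> pure (I_d ps ds) \<and> size (I_d ps ds) \<le> n"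
    if "ds \<in> assignments n ps" for ds
    using I_d_is_pure_maze[OF assms(3)[folded ps] that] .
  have "s \<in> lspan (delta ` {Q. is_maze X Y Q \<and> pure Q \<and> size Q \<le> n})"
    unfolding s_def[abs_def] using I_d
    by (intro lspan_sum[OF finite_assignments] lspan.smult lspan.gen) auto
  moreover have "r \<in> laby_n_kernel n"
  proof (rule relation_mem_laby_n_kernel[OF _ assms(1,2)])
    show "r \<in> laby_rels \<union> rels_III n \<union> rels_IV n"
      unfolding rels_IV_def r_def[abs_def] s_def c_def by blast
    have "supp r \<subseteq> insert (mset ps) (I_d ps ` assignments n ps)"
      by (auto simp: supp_def r_def s_def delta_def intro!: sum.neutral)
    then show "finite (supp r)"
      by (rule finite_subset) (simp add: finite_assignments)
    show "is_maze X Y M" if "M \<in> supp r" for M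
      using \<open>supp r \<subseteq> _\<close> that I_d assms(3) ps by auto
  qed
  moreover have "delta P = (\<lambda>M. s M + r M)" unfolding r_def ps by simp
  ultimately show ?thesis by blast
qed

section \<open>Pure mazes are independent\<close>

lemma lin_maze_diff_relation_I: "lin_maze_diff (delta (add_mset (x, y, 0) P)) \<psi> v = 0"
  by (simp add: lin_maze_diff_delta maze_diff_def fwd_diff_def passage_act_label_0)

lemma lin_maze_diff_relation_II:
  "lin_maze_diff (\<lambda>M. delta (add_mset (x, y, a + b) P) M - delta (add_mset (x, y, a) P) M
      - delta (add_mset (x, y, b) P) M - delta (add_mset (x, y, a) (add_mset (x, y, b) P)) M) \<psi> v = 0"
proof -
  have "lin_maze_diff (\<lambda>M. delta (add_mset (x, y, a + b) P) M - delta (add_mset (x, y, a) P) M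
      - delta (add_mset (x, y, b) P) M - delta (add_mset (x, y, a) (add_mset (x, y, b) P)) M) \<psi> v
    = maze_diff (add_mset (x, y, a + b) P) \<psi> v - maze_diff (add_mset (x, y, a) P) \<psi> v
      - maze_diff (add_mset (x, y, b) P) \<psi> v - maze_diff (add_mset (x, y, a) (add_mset (x, y, b) P)) \<psi> v"
    by (simp only: lin_maze_diff_diff lin_maze_diff_delta finite_supp_diff finite_supp_delta)
  also have "\<dots> = 0"
    by (simp add: maze_diff_def fwd_diff_def passage_act_label_add algebra_simps)
  finally show ?thesis .
qed

lemma lin_maze_diff_relation_III:
  "polynomial_map n \<psi> \<Longrightarrow> n < size P \<Longrightarrow> lin_maze_diff (delta P) \<psi> v = 0"
  by (simp add: lin_maze_diff_delta maze_diff_def multi_diff_eq_0)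

definition pairs_of :: "('a, 'b) maze \<Rightarrow> ('a \<times> 'a) multiset" where
  "pairs_of M = image_mset (\<lambda>p. (fst p, fst (snd p))) M"

definition id_matrix :: "'a \<times> 'a \<Rightarrow> 'b::comm_ring_1" where
  "id_matrix = (\<lambda>z. if fst z = snd z then 1 else 0)"

lemma passage_act_id_matrix: "passage_act (x, y, 1) id_matrix = delta (x, y)"
  by (auto simp: passage_act_def id_matrix_def delta_def)

lemma image_mset_pairs_of_pure:
  "pure M \<Longrightarrow> image_mset (\<lambda>z. (fst z, snd z, 1)) (pairs_of M) = M"
  unfolding pairs_of_def pure_def image_mset.compositionality
  by (induction M) (auto simp: prod_eq_iff)

lemma pure_eq_iff_pairs_of_eq: "pure M \<Longrightarrow> pure Q \<Longrightarrow> pairs_of M = pairs_of Q \<longleftrightarrow> M = Q"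
  by (metis image_mset_pairs_of_pure)

lemma add_mset_subseteq_mset_iff: "add_mset z A \<subseteq># K \<longleftrightarrow> A \<subseteq># K \<and> z \<in># K - A"
proof
  assume h: "add_mset z A \<subseteq># K"
  then have "A \<subseteq># K"
    by (rule subset_mset.less_imp_le[OF conjunct2[OF mset_subset_eq_insertD]])
  moreover have "count (add_mset z A) z \<le> count K z"
    using h by (rule mset_subset_eq_count)
  ultimately show "A \<subseteq># K \<and> z \<in># K - A" by (simp add: in_diff_count)
next
  assume "A \<subseteq># K \<and> z \<in># K - A"
  then have "K = A + (K - A)" "{#z#} \<subseteq># K - A" by simp_all
  then show "add_mset z A \<subseteq># K"
    using subset_mset.add_left_mono[of "{#z#}" "K - A" A] by simp
qed

context
  assumes binomial: "binomial_ring TYPE('b::comm_ring_1)"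
begin

subsection \<open>Numerical polynomials\<close>

lemma of_nat_mult_eq_0_imp: "m > 0 \<Longrightarrow> of_nat m * (a::'b) = 0 \<Longrightarrow> a = 0"
  using binomial unfolding binomial_ring_def by blast

lemma of_nat_mult_cancel: "m > 0 \<Longrightarrow> of_nat m * (x::'b) = of_nat m * y \<Longrightarrow> x = y"
  using of_nat_mult_eq_0_imp[of m "x - y"] by (simp add: right_diff_distrib)

lemma fact_mult_bin: "of_nat (fact k) * bin (a::'b) k = (\<Prod>i<k. a - of_nat i)"
proof -
  let ?P = "\<lambda>c. of_nat (fact k) * c = (\<Prod>i<k. a - of_nat i)"
  have ex: "\<exists>c. ?P c" using binomial unfolding binomial_ring_def by blast
  have "\<exists>!c. ?P c"
  proof -
    from ex obtain c where c: "?P c" by blast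
    have "\<And>c'. ?P c' \<Longrightarrow> c' = c" using c of_nat_mult_cancel[of "fact k"] by force
    with c show ?thesis by blast
  qed
  then show ?thesis unfolding bin_def by (rule theI')
qed

lemma bin_eqI: "of_nat (fact k) * c = (\<Prod>i<k. (a::'b) - of_nat i) \<Longrightarrow> bin a k = c"
  using fact_mult_bin[of k a] of_nat_mult_cancel[of "fact k"] by force

lemma bin_0 [simp]: "bin (a::'b) 0 = 1"
  by (rule bin_eqI) simp

lemma bin_zero_Suc [simp]: "bin (0::'b) (Suc k) = 0"
proof (rule bin_eqI)
  have "(\<Prod>i<Suc k. (0::'b) - of_nat i) = 0"
    by (rule prod_zero) (auto intro: bexI[of _ 0])
  then show "of_nat (fact (Suc k)) * 0 = (\<Prod>i<Suc k. (0::'b) - of_nat i)" by simp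
qed

lemma Suc_mult_bin_Suc: "of_nat (Suc k) * bin (x::'b) (Suc k) = bin x k * (x - of_nat k)"
proof (rule of_nat_mult_cancel[of "fact k"])
  show "0 < (fact k :: nat)" by simp
  have "of_nat (fact k) * (of_nat (Suc k) * bin x (Suc k)) = of_nat (fact (Suc k)) * bin x (Suc k)"
    by (simp add: algebra_simps)
  also have "\<dots> = (\<Prod>i<Suc k. x - of_nat i)" by (rule fact_mult_bin)
  also have "\<dots> = (\<Prod>i<k. x - of_nat i) * (x - of_nat k)" by simp
  also have "\<dots> = of_nat (fact k) * (bin x k * (x - of_nat k))"
    by (simp add: fact_mult_bin[symmetric] mult.assoc)
  finally show "of_nat (fact k) * (of_nat (Suc k) * bin x (Suc k)) = of_nat (fact k) * (bin x k * (x - of_nat k))" .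
qed

lemma mult_bin_self: "x * bin (x::'b) d = of_nat (Suc d) * bin x (Suc d) + of_nat d * bin x d"
  by (simp only: Suc_mult_bin_Suc) (simp add: algebra_simps)

lemma bin_Pascal: "bin ((x::'b) + 1) (Suc d) = bin x (Suc d) + bin x d"
proof (rule of_nat_mult_cancel[of "fact (Suc d)"])
  show "0 < (fact (Suc d) :: nat)" by simp
  have A: "(\<Prod>i<Suc d. x + 1 - of_nat i) = (x + 1) * (\<Prod>i<d. x - of_nat i)"
    by (subst prod.lessThan_Suc_shift) (simp add: algebra_simps)
  have "of_nat (fact (Suc d)) * (bin x (Suc d) + bin x d)
        = (\<Prod>i<Suc d. x - of_nat i) + of_nat (Suc d) * (of_nat (fact d) * bin x d)"
    by (simp add: fact_mult_bin[symmetric] algebra_simps)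
  also have "\<dots> = (\<Prod>i<d. x - of_nat i) * (x - of_nat d) + of_nat (Suc d) * (\<Prod>i<d. x - of_nat i)"
    by (simp add: fact_mult_bin)
  also have "\<dots> = (x + 1) * (\<Prod>i<d. x - of_nat i)" by (simp add: algebra_simps)
  finally show "of_nat (fact (Suc d)) * bin (x + 1) (Suc d) = of_nat (fact (Suc d)) * (bin x (Suc d) + bin x d)"
    using A fact_mult_bin[of "Suc d" "x+1"] by simp
qed

definition numerical_poly :: "nat \<Rightarrow> ('b \<Rightarrow> 'b) \<Rightarrow> bool" where
  "numerical_poly K g \<longleftrightarrow> (\<exists>\<beta>. \<forall>a. g a = (\<Sum>d\<le>K. \<beta> d * bin a d))"

lemma fwd_diff_one_sum_bin:
  fixes \<gamma> :: "nat \<Rightarrow> 'b"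
  shows "fwd_diff 1 (\<lambda>a. \<Sum>d\<le>Suc M. \<gamma> d * bin a d) = (\<lambda>a. \<Sum>d\<le>M. \<gamma> (Suc d) * bin a d)"
proof
  fix a :: 'b
  have "fwd_diff 1 (\<lambda>a. \<Sum>d\<le>Suc M. \<gamma> d * bin a d) a = (\<Sum>d\<le>Suc M. \<gamma> d * (bin (a+1) d - bin a d))"
    unfolding fwd_diff_def by (simp add: sum_subtractf right_diff_distrib)
  also have "\<dots> = (\<Sum>d\<le>M. \<gamma> (Suc d) * (bin (a+1) (Suc d) - bin a (Suc d)))"
    by (subst sum.atMost_Suc_shift) simp
  also have "\<dots> = (\<Sum>d\<le>M. \<gamma> (Suc d) * bin a d)"
    by (simp add: bin_Pascal)
  finally show "fwd_diff 1 (\<lambda>a. \<Sum>d\<le>Suc M. \<gamma> d * bin a d) a = (\<Sum>d\<le>M. \<gamma> (Suc d) * bin a d)" .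
qed

lemma fwd_diff_one_power_sum_bin:
  fixes \<beta> :: "nat \<Rightarrow> 'b"
  shows "e \<le> K \<Longrightarrow> (fwd_diff 1 ^^ e) (\<lambda>a. \<Sum>d\<le>K. \<beta> d * bin a d) = (\<lambda>a. \<Sum>d\<le>K - e. \<beta> (d + e) * bin a d)"
proof (induction e)
  case 0
  then show ?case by simp
next
  case (Suc e)
  define M where "M = K - Suc e"
  have M: "K - e = Suc M" using Suc.prems unfolding M_def by arith
  have "(fwd_diff 1 ^^ Suc e) (\<lambda>a. \<Sum>d\<le>K. \<beta> d * bin a d) = fwd_diff 1 (\<lambda>a. \<Sum>d\<le>Suc M. \<beta> (d + e) * bin a d)"
    using Suc M by simp
  also have "\<dots> = (\<lambda>a. \<Sum>d\<le>M. \<beta> (Suc d + e) * bin a d)" by (rule fwd_diff_one_sum_bin)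
  finally show ?case using M unfolding M_def by simp
qed

lemma sum_mult_bin_0: "(\<Sum>d\<le>M. \<gamma> d * bin (0::'b) d) = \<gamma> 0"
proof -
  have "(\<Sum>d\<le>M. \<gamma> d * bin (0::'b) d) = (\<Sum>d\<in>{0}. \<gamma> d * bin (0::'b) d)"
  proof (rule sum.mono_neutral_right)
    show "\<forall>i\<in>{..M} - {0}. \<gamma> i * bin (0::'b) i = 0"
    proof
      fix i assume "i \<in> {..M} - {0}"
      then obtain j where "i = Suc j" by (cases i) auto
      then show "\<gamma> i * bin (0::'b) i = 0" by simp
    qed
  qed auto
  then show ?thesis by simp
qed

lemma numerical_poly_coeff:
  fixes \<beta> :: "nat \<Rightarrow> 'b"
  assumes "\<forall>a. g a = (\<Sum>d\<le>K. \<beta> d * bin a d)" "e \<le> K"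
  shows "(fwd_diff 1 ^^ e) g 0 = \<beta> e"
proof -
  have "g = (\<lambda>a. \<Sum>d\<le>K. \<beta> d * bin a d)" using assms(1) by auto
  then show ?thesis using fwd_diff_one_power_sum_bin[OF assms(2), of \<beta>] sum_mult_bin_0 by simp
qed

lemma numerical_poly_Newton: "numerical_poly K g \<Longrightarrow> g a = (\<Sum>d\<le>K. (fwd_diff 1 ^^ d) g 0 * bin a d)"
proof -
  assume "numerical_poly K g"
  then obtain \<beta> where b: "\<forall>a. g a = (\<Sum>d\<le>K. \<beta> d * bin a d)" unfolding numerical_poly_def by blast
  have "\<And>d. d \<in> {..K} \<Longrightarrow> \<beta> d * bin a d = (fwd_diff 1 ^^ d) g 0 * bin a d"
    using numerical_poly_coeff[OF b] by simp
  then have "(\<Sum>d\<le>K. \<beta> d * bin a d) = (\<Sum>d\<le>K. (fwd_diff 1 ^^ d) g 0 * bin a d)"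
    by (rule sum.cong[OF refl])
  then show ?thesis using b by simp
qed

lemma numerical_poly_cancel:
  assumes "numerical_poly K (\<lambda>a. of_nat j * g a)" "j > 0"
  shows "numerical_poly K g"
proof -
  have "\<forall>a. g a = (\<Sum>d\<le>K. (fwd_diff 1 ^^ d) g 0 * bin a d)"
  proof
    fix a
    have "of_nat j * g a = (\<Sum>d\<le>K. (fwd_diff 1 ^^ d) (\<lambda>a. of_nat j * g a) 0 * bin a d)"
      using numerical_poly_Newton[OF assms(1)] .
    also have "\<dots> = of_nat j * (\<Sum>d\<le>K. (fwd_diff 1 ^^ d) g 0 * bin a d)"
      by (simp add: fwd_diff_power_scale sum_distrib_left mult.assoc)
    finally show "g a = (\<Sum>d\<le>K. (fwd_diff 1 ^^ d) g 0 * bin a d)"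
      using of_nat_mult_cancel[OF assms(2)] by blast
  qed
  then show ?thesis unfolding numerical_poly_def by (rule exI[of _ "\<lambda>d. (fwd_diff 1 ^^ d) g 0"])
qed

lemma numerical_poly_reduce:
  assumes "numerical_poly (Suc m) g" "(fwd_diff 1 ^^ Suc m) g 0 = 0"
  shows "numerical_poly m g"
proof -
  have "\<forall>a. g a = (\<Sum>d\<le>m. (fwd_diff 1 ^^ d) g 0 * bin a d)"
    using numerical_poly_Newton[OF assms(1)] assms(2) by simp
  then show ?thesis unfolding numerical_poly_def by (rule exI[of _ "\<lambda>d. (fwd_diff 1 ^^ d) g 0"])
qed

lemma numerical_poly_mono: "numerical_poly K g \<Longrightarrow> K \<le> K' \<Longrightarrow> numerical_poly K' g"
proof -
  assume "numerical_poly K g" "K \<le> K'"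
  then obtain \<beta> where b: "\<forall>a. g a = (\<Sum>d\<le>K. \<beta> d * bin a d)" unfolding numerical_poly_def by blast
  have "\<forall>a. g a = (\<Sum>d\<le>K'. (if d \<le> K then \<beta> d else 0) * bin a d)"
  proof
    fix a
    have "(\<Sum>d\<le>K'. (if d \<le> K then \<beta> d else 0) * bin a d) = (\<Sum>d\<le>K. (if d \<le> K then \<beta> d else 0) * bin a d)"
      by (rule sum.mono_neutral_right) (use \<open>K \<le> K'\<close> in auto)
    then show "g a = (\<Sum>d\<le>K'. (if d \<le> K then \<beta> d else 0) * bin a d)" using b by simp
  qed
  then show "numerical_poly K' g" unfolding numerical_poly_def by (rule exI[of _ "\<lambda>d. if d \<le> K then \<beta> d else 0"])
qed

lemma numerical_poly_add: "numerical_poly K f \<Longrightarrow> numerical_poly K g \<Longrightarrow> numerical_poly K (\<lambda>a. f a + g a)"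
proof -
  assume "numerical_poly K f" "numerical_poly K g"
  then obtain \<beta>1 \<beta>2 where b1: "\<forall>a. f a = (\<Sum>d\<le>K. \<beta>1 d * bin a d)"
    and b2: "\<forall>a. g a = (\<Sum>d\<le>K. \<beta>2 d * bin a d)" unfolding numerical_poly_def by blast
  have "\<forall>a. f a + g a = (\<Sum>d\<le>K. (\<beta>1 d + \<beta>2 d) * bin a d)"
    using b1 b2 by (simp add: sum.distrib distrib_right)
  then show ?thesis unfolding numerical_poly_def by (rule exI[of _ "\<lambda>d. \<beta>1 d + \<beta>2 d"])
qed

lemma numerical_poly_scale: "numerical_poly K g \<Longrightarrow> numerical_poly K (\<lambda>a. c * g a)"
proof -
  assume "numerical_poly K g"
  then obtain \<beta> where b: "\<forall>a. g a = (\<Sum>d\<le>K. \<beta> d * bin a d)" unfolding numerical_poly_def by blast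
  have "\<forall>a. c * g a = (\<Sum>d\<le>K. (c * \<beta> d) * bin a d)"
    using b by (simp add: sum_distrib_left mult.assoc)
  then show ?thesis unfolding numerical_poly_def by (rule exI[of _ "\<lambda>d. c * \<beta> d"])
qed

lemma numerical_poly_const: "numerical_poly K (\<lambda>a. c)"
proof -
  have "\<forall>a. c = (\<Sum>d\<le>0. c * bin a d)" by simp
  then have "numerical_poly 0 (\<lambda>a. c)" unfolding numerical_poly_def by (rule exI[of _ "\<lambda>d. c"])
  then show ?thesis by (rule numerical_poly_mono) simp
qed

lemma numerical_poly_bin: "d \<le> K \<Longrightarrow> numerical_poly K (\<lambda>a. bin a d)"
proof -
  assume "d \<le> K"
  have "\<forall>a. bin a d = (\<Sum>e\<le>K. (if e = d then 1 else 0) * bin a e)"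
  proof
    fix a
    have "(\<Sum>e\<le>K. (if e = d then 1 else 0) * bin a e) = (\<Sum>e\<le>K. if e = d then bin a e else 0)"
      by (rule sum.cong) auto
    also have "\<dots> = bin a d" using \<open>d \<le> K\<close> by (simp add: sum.delta')
    finally show "bin a d = (\<Sum>e\<le>K. (if e = d then 1 else 0) * bin a e)" by simp
  qed
  then show ?thesis unfolding numerical_poly_def by (rule exI[of _ "\<lambda>e. if e = d then 1 else 0"])
qed

lemma numerical_poly_diff: "numerical_poly K f \<Longrightarrow> numerical_poly K g \<Longrightarrow> numerical_poly K (\<lambda>a. f a - g a)"
  using numerical_poly_add[of K f "\<lambda>a. (-1) * g a"] numerical_poly_scale[of K g "-1"] by simp

lemma numerical_poly_sum:
  "finite I \<Longrightarrow> (\<And>i. i \<in> I \<Longrightarrow> numerical_poly K (f i)) \<Longrightarrow> numerical_poly K (\<lambda>a. \<Sum>i\<in>I. f i a)"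
proof (induction I rule: finite_induct)
  case empty
  then show ?case using numerical_poly_const[of K 0] by simp
next
  case (insert x F)
  then show ?case using numerical_poly_add[of K "f x" "\<lambda>a. \<Sum>i\<in>F. f i a"] by simp
qed

lemma numerical_poly_mult_id: "numerical_poly K g \<Longrightarrow> numerical_poly (Suc K) (\<lambda>a. a * g a)"
proof -
  assume "numerical_poly K g"
  then obtain \<beta> where b: "\<forall>a. g a = (\<Sum>d\<le>K. \<beta> d * bin a d)" unfolding numerical_poly_def by blast
  have eq: "(\<lambda>a. a * g a) = (\<lambda>a. \<Sum>d\<le>K. \<beta> d * (of_nat (Suc d) * bin a (Suc d)) + \<beta> d * (of_nat d * bin a d))"
  proof
    fix a
    have "a * g a = (\<Sum>d\<le>K. \<beta> d * (a * bin a d))"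
      using b by (simp add: sum_distrib_left mult.left_commute)
    then show "a * g a = (\<Sum>d\<le>K. \<beta> d * (of_nat (Suc d) * bin a (Suc d)) + \<beta> d * (of_nat d * bin a d))"
      by (simp only: mult_bin_self distrib_left)
  qed
  show ?thesis unfolding eq
  proof (rule numerical_poly_sum)
    fix d assume "d \<in> {..K}"
    then show "numerical_poly (Suc K) (\<lambda>a. \<beta> d * (of_nat (Suc d) * bin a (Suc d)) + \<beta> d * (of_nat d * bin a d))"
      by (intro numerical_poly_add numerical_poly_scale numerical_poly_bin) auto
  qed simp
qed

lemma numerical_poly_mult_bin: "numerical_poly K g \<Longrightarrow> numerical_poly (K + e) (\<lambda>a. g a * bin a e)"
proof (induction e)
  case 0
  then show ?case by simp
next
  case (Suc e)
  have IH: "numerical_poly (K + e) (\<lambda>a. g a * bin a e)" using Suc by blast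
  have "(\<lambda>a. of_nat (Suc e) * (g a * bin a (Suc e))) = (\<lambda>a. a * (g a * bin a e) - of_nat e * (g a * bin a e))"
  proof
    fix a
    have "of_nat (Suc e) * (g a * bin a (Suc e)) = g a * (of_nat (Suc e) * bin a (Suc e))"
      by (simp only: mult.left_commute)
    also have "\<dots> = g a * (bin a e * (a - of_nat e))" by (simp only: Suc_mult_bin_Suc)
    finally show "of_nat (Suc e) * (g a * bin a (Suc e)) = a * (g a * bin a e) - of_nat e * (g a * bin a e)"
      by (simp add: algebra_simps)
  qed
  moreover have "numerical_poly (K + Suc e) (\<lambda>a. a * (g a * bin a e) - of_nat e * (g a * bin a e))"
  proof -
    have A: "numerical_poly (Suc (K + e)) (\<lambda>a. a * (g a * bin a e))" by (rule numerical_poly_mult_id[OF IH])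
    have B: "numerical_poly (Suc (K + e)) (\<lambda>a. of_nat e * (g a * bin a e))"
      by (rule numerical_poly_mono[OF numerical_poly_scale[OF IH]]) simp
    show ?thesis using numerical_poly_diff[OF A B] by simp
  qed
  ultimately have "numerical_poly (K + Suc e) (\<lambda>a. of_nat (Suc e) * (g a * bin a (Suc e)))" by simp
  then show ?case by (rule numerical_poly_cancel) simp
qed

lemma numerical_poly_mult: "numerical_poly K f \<Longrightarrow> numerical_poly L g \<Longrightarrow> numerical_poly (K + L) (\<lambda>a. f a * g a)"
proof -
  assume f: "numerical_poly K f" and "numerical_poly L g"
  then obtain \<beta> where b: "\<forall>a. g a = (\<Sum>d\<le>L. \<beta> d * bin a d)" unfolding numerical_poly_def by blast
  have eq: "(\<lambda>a. f a * g a) = (\<lambda>a. \<Sum>d\<le>L. \<beta> d * (f a * bin a d))"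
    using b by (auto simp: sum_distrib_left algebra_simps)
  show ?thesis unfolding eq
  proof (rule numerical_poly_sum)
    fix d assume "d \<in> {..L}"
    then show "numerical_poly (K + L) (\<lambda>a. \<beta> d * (f a * bin a d))"
      by (intro numerical_poly_scale numerical_poly_mono[OF numerical_poly_mult_bin[OF f]]) auto
  qed simp
qed

lemma numerical_poly_bin_affine: "numerical_poly k (\<lambda>a. bin (u + a * c) k)"
proof (induction k)
  case 0
  then show ?case using numerical_poly_const by simp
next
  case (Suc k)
  have "(\<lambda>a. of_nat (Suc k) * bin (u + a * c) (Suc k)) = (\<lambda>a. c * (a * bin (u + a * c) k) + (u - of_nat k) * bin (u + a * c) k)"
  proof
    fix a
    have "of_nat (Suc k) * bin (u + a * c) (Suc k) = bin (u + a * c) k * (u + a * c - of_nat k)"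
      by (simp only: Suc_mult_bin_Suc)
    then show "of_nat (Suc k) * bin (u + a * c) (Suc k) = c * (a * bin (u + a * c) k) + (u - of_nat k) * bin (u + a * c) k"
      by (simp add: algebra_simps)
  qed
  moreover have "numerical_poly (Suc k) (\<lambda>a. c * (a * bin (u + a * c) k) + (u - of_nat k) * bin (u + a * c) k)"
  proof (rule numerical_poly_add)
    show "numerical_poly (Suc k) (\<lambda>a. c * (a * bin (u + a * c) k))" by (rule numerical_poly_scale[OF numerical_poly_mult_id[OF Suc]])
    show "numerical_poly (Suc k) (\<lambda>a. (u - of_nat k) * bin (u + a * c) k)" by (rule numerical_poly_mono[OF numerical_poly_scale[OF Suc]]) simp
  qed
  ultimately have "numerical_poly (Suc k) (\<lambda>a. of_nat (Suc k) * bin (u + a * c) (Suc k))" by simp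
  then show ?case by (rule numerical_poly_cancel) simp
qed

text \<open>The test functions: polynomial maps that are numerical polynomials on every line
  \<open>a \<mapsto> u + a g\<close>.\<close>
definition numerical_polymap :: "nat \<Rightarrow> (('x \<Rightarrow> 'b) \<Rightarrow> 'b) \<Rightarrow> bool" where
  "numerical_polymap m f \<longleftrightarrow> (\<forall>u g. numerical_poly m (\<lambda>a. f (u + smul a g))) \<and> polynomial_map m f"

lemma numerical_polymap_polynomial_map: "numerical_polymap m f \<Longrightarrow> polynomial_map m f"
  by (simp add: numerical_polymap_def)

lemma fwd_diff_one_power_line:
  fixes F :: "('x \<Rightarrow> 'b) \<Rightarrow> 'b"
  shows "(fwd_diff 1 ^^ d) (\<lambda>a. F (u + smul a g)) = (\<lambda>a. (fwd_diff g ^^ d) F (u + smul a g))"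
proof (induction d)
  case 0 then show ?case by simp
next
  case (Suc d)
  show ?case
  proof
    fix a
    have "(fwd_diff 1 ^^ Suc d) (\<lambda>a. F (u + smul a g)) a
        = ((fwd_diff g ^^ d) F) (u + smul (a + 1) g) - ((fwd_diff g ^^ d) F) (u + smul a g)"
      by (simp only: funpow.simps o_apply Suc.IH fwd_diff_def[of 1])
    also have "\<dots> = (fwd_diff g ^^ Suc d) F (u + smul a g)"
      by (simp add: smul_add_one fwd_diff_def add.assoc)
    finally show "(fwd_diff 1 ^^ Suc d) (\<lambda>a. F (u + smul a g)) a = (fwd_diff g ^^ Suc d) F (u + smul a g)" .
  qed
qed

lemma numerical_polymap_Newton: "numerical_polymap m f \<Longrightarrow> f (u + smul a g) = (\<Sum>d\<le>m. ((fwd_diff g) ^^ d) f u * bin a d)"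
proof -
  assume "numerical_polymap m f"
  then have "numerical_poly m (\<lambda>a. f (u + smul a g))" unfolding numerical_polymap_def by blast
  from numerical_poly_Newton[OF this] show ?thesis by (simp add: fwd_diff_one_power_line)
qed

lemma numerical_polymap_add:
  "numerical_polymap m f \<Longrightarrow> numerical_polymap m g \<Longrightarrow> numerical_polymap m (\<lambda>w. f w + g w)"
  unfolding numerical_polymap_def using numerical_poly_add polynomial_map_add by blast

lemma numerical_polymap_scale: "numerical_polymap m f \<Longrightarrow> numerical_polymap m (\<lambda>w. c * f w)"
  unfolding numerical_polymap_def using numerical_poly_scale polynomial_map_scale by blast

lemma numerical_polymap_const: "numerical_polymap m (\<lambda>w. c)"
  unfolding numerical_polymap_def using numerical_poly_const polynomial_map_const by blast

lemma numerical_polymap_mono: "numerical_polymap m f \<Longrightarrow> m \<le> m' \<Longrightarrow> numerical_polymap m' f"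
  unfolding numerical_polymap_def using numerical_poly_mono polynomial_map_mono by blast

lemma numerical_polymap_sum:
  "finite I \<Longrightarrow> (\<And>i. i \<in> I \<Longrightarrow> numerical_polymap m (f i)) \<Longrightarrow> numerical_polymap m (\<lambda>w. \<Sum>i\<in>I. f i w)"
proof (induction I rule: finite_induct)
  case empty
  then show ?case using numerical_polymap_const[of m 0] by simp
next
  case (insert x F)
  then show ?case using numerical_polymap_add[of m "f x" "\<lambda>w. \<Sum>i\<in>F. f i w"] by simp
qed

lemma numerical_polymap_mult:
  "numerical_polymap m1 f \<Longrightarrow> numerical_polymap m2 g \<Longrightarrow> numerical_polymap (m1 + m2) (\<lambda>w. f w * g w)"
  unfolding numerical_polymap_def using numerical_poly_mult polynomial_map_mult by blast

lemma numerical_polymap_compose_linear: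
  assumes "\<And>x y. L (x + y) = L x + L y" "\<And>a g. L (smul a g) = smul a (L g)"
  shows "numerical_polymap m f \<Longrightarrow> numerical_polymap m (\<lambda>w. f (L w))"
  unfolding numerical_polymap_def using polynomial_map_compose_additive[of L m f] assms by auto

lemma numerical_polymap_fwd_diff:
  assumes "numerical_polymap (Suc m) f"
  shows "numerical_polymap m (fwd_diff h f)"
proof -
  have z: "polynomial_map m (fwd_diff h f)" using assms unfolding numerical_polymap_def by simp
  have "numerical_poly m (\<lambda>a. fwd_diff h f (u + smul a g))" for u g
  proof (rule numerical_poly_reduce)
    have "(\<lambda>a. fwd_diff h f (u + smul a g)) = (\<lambda>a. f ((u + h) + smul a g) - f (u + smul a g))"
      by (auto simp: fwd_diff_def add_ac)
    moreover have "numerical_poly (Suc m) (\<lambda>a. f ((u + h) + smul a g))" "numerical_poly (Suc m) (\<lambda>a. f (u + smul a g))"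
      using assms unfolding numerical_polymap_def by blast+
    ultimately show "numerical_poly (Suc m) (\<lambda>a. fwd_diff h f (u + smul a g))"
      using numerical_poly_diff by simp
    show "(fwd_diff 1 ^^ Suc m) (\<lambda>a. fwd_diff h f (u + smul a g)) 0 = 0"
      unfolding fwd_diff_one_power_line using polynomial_map_fwd_diff_power_eq_0[OF z, of g] by simp
  qed
  then show ?thesis using z unfolding numerical_polymap_def by blast
qed

lemma numerical_polymap_fwd_diff_power:
  "numerical_polymap m f \<Longrightarrow> d \<le> m \<Longrightarrow> numerical_polymap (m - d) ((fwd_diff g ^^ d) f)"
proof (induction d)
  case 0 then show ?case by simp
next
  case (Suc d)
  then have "numerical_polymap (Suc (m - Suc d)) ((fwd_diff g ^^ d) f)" by (simp add: Suc_diff_Suc)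
  then show ?case by (simp add: numerical_polymap_fwd_diff)
qed

lemma bin_add_Vandermonde: "bin (t + s) k = (\<Sum>d\<le>k. bin s d * bin (t::'b) (k - d))"
proof -
  let ?\<chi> = "\<lambda>a. bin (t + a) k"
  have NPc: "numerical_poly k ?\<chi>" using numerical_poly_bin_affine[where u = t and c = 1 and k = k] by simp
  have D: "d \<le> k \<Longrightarrow> (fwd_diff 1 ^^ d) ?\<chi> = (\<lambda>a. bin (t + a) (k - d))" for d
  proof (induction d)
    case 0 then show ?case by simp
  next
    case (Suc d)
    have j: "k - d = Suc (k - Suc d)" using Suc.prems by arith
    have IH: "(fwd_diff 1 ^^ d) ?\<chi> = (\<lambda>a. bin (t + a) (k - d))" using Suc by simp
    show ?case
    proof
      fix a
      have "(fwd_diff 1 ^^ Suc d) ?\<chi> a = bin (t + a + 1) (Suc (k - Suc d)) - bin (t + a) (Suc (k - Suc d))"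
        using IH j by (simp add: fwd_diff_def add.assoc)
      also have "\<dots> = bin (t + a) (k - Suc d)" by (simp add: bin_Pascal)
      finally show "(fwd_diff 1 ^^ Suc d) ?\<chi> a = bin (t + a) (k - Suc d)" .
    qed
  qed
  have "bin (t + s) k = (\<Sum>d\<le>k. (fwd_diff 1 ^^ d) ?\<chi> 0 * bin s d)" using numerical_poly_Newton[OF NPc, of s] by simp
  also have "\<dots> = (\<Sum>d\<le>k. bin s d * bin t (k - d))"
    by (rule sum.cong[OF refl]) (simp add: D)
  finally show ?thesis .
qed

lemma polynomial_map_bin_coord: "polynomial_map k (\<lambda>w::'x \<Rightarrow> 'b. bin (w z) k)"
proof (induction k rule: less_induct)
  case (less k)
  show ?case
  proof (cases k)
    case 0 then show ?thesis using polynomial_map_const by (simp add: bin_0)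
  next
    case (Suc j)
    have "polynomial_map j (fwd_diff h (\<lambda>w. bin (w z) k))" for h :: "'x \<Rightarrow> 'b"
    proof -
      have eq: "fwd_diff h (\<lambda>w. bin (w z) k) = (\<lambda>w. \<Sum>d\<le>j. bin (h z) (Suc d) * bin (w z) (j - d))"
      proof
        fix w :: "'x \<Rightarrow> 'b"
        have "fwd_diff h (\<lambda>w. bin (w z) k) w = (\<Sum>d\<le>k. bin (h z) d * bin (w z) (k - d)) - bin (w z) k"
          by (simp add: fwd_diff_def bin_add_Vandermonde)
        also have "\<dots> = (\<Sum>d\<le>j. bin (h z) (Suc d) * bin (w z) (j - d))"
          using Suc by (simp only: sum.atMost_Suc_shift) (simp add: bin_0 del: sum.atMost_Suc)
        finally show "fwd_diff h (\<lambda>w. bin (w z) k) w = (\<Sum>d\<le>j. bin (h z) (Suc d) * bin (w z) (j - d))" .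
      qed
      show ?thesis unfolding eq
      proof (rule polynomial_map_sum)
        fix d assume "d \<in> {..j}"
        have "j - d < k" using Suc by simp
        then have "polynomial_map (j - d) (\<lambda>w::'x \<Rightarrow> 'b. bin (w z) (j - d))" by (rule less)
        then have "polynomial_map j (\<lambda>w::'x \<Rightarrow> 'b. bin (w z) (j - d))" by (rule polynomial_map_mono) simp
        then show "polynomial_map j (\<lambda>w. bin (h z) (Suc d) * bin (w z) (j - d))"
          by (rule polynomial_map_scale)
      qed simp
    qed
    then show ?thesis using Suc by simp
  qed
qed

lemma numerical_polymap_bin_coord: "numerical_polymap k (\<lambda>w::'x \<Rightarrow> 'b. bin (w z) k)"
  unfolding numerical_polymap_def
proof (intro conjI allI polynomial_map_bin_coord)
  fix u g :: "'x \<Rightarrow> 'b"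
  show "numerical_poly k (\<lambda>a. bin ((u + smul a g) z) k)"
    using numerical_poly_bin_affine[where u = "u z" and c = "g z" and k = k] by (simp add: smul_def plus_fun_def)
qed

lemma numerical_polymap_prod_bin:
  "finite Z \<Longrightarrow> numerical_polymap (\<Sum>z\<in>Z. k z) (\<lambda>w::'x \<Rightarrow> 'b. \<Prod>z\<in>Z. bin (w z) (k z))"
proof (induction Z rule: finite_induct)
  case empty then show ?case using numerical_polymap_const[of 0 1] by simp
next
  case (insert x F)
  then show ?case using numerical_polymap_mult[OF numerical_polymap_bin_coord[of "k x" x] insert.IH] by simp
qed

lemma numerical_polymap_maze_diff:
  fixes \<phi> :: "('a \<times> 'a \<Rightarrow> 'b) \<Rightarrow> 'b"
  assumes "numerical_polymap n \<phi>"
  shows "numerical_polymap n (\<lambda>u. maze_diff B \<phi> u)"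
proof -
  obtain bs where B: "B = mset bs" using ex_mset by metis
  show ?thesis unfolding B maze_diff_mset
  proof (intro numerical_polymap_sum numerical_polymap_scale)
    fix S
    show "numerical_polymap n (\<lambda>u. \<phi> (\<Sum>i\<in>S. passage_act (bs ! i) u))"
      by (rule numerical_polymap_compose_linear[OF _ _ assms])
        (simp_all add: passage_act_add passage_act_smul smul_sum sum.distrib)
  qed simp
qed

lemma fwd_diff_smul_Newton:
  fixes \<psi> :: "('x \<Rightarrow> 'b) \<Rightarrow> 'b"
  assumes "numerical_polymap m \<psi>"
  shows "fwd_diff (smul a g) \<psi> = (\<lambda>u. \<Sum>d\<in>{1..m}. bin a d * (fwd_diff g ^^ d) \<psi> u)"
proof
  fix u
  have "{..m} = insert 0 {1..m}" by auto
  then have "\<psi> (u + smul a g) = \<psi> u + (\<Sum>d\<in>{1..m}. (fwd_diff g ^^ d) \<psi> u * bin a d)"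
    using numerical_polymap_Newton[OF assms] by (simp add: bin_0)
  then show "fwd_diff (smul a g) \<psi> u = (\<Sum>d\<in>{1..m}. bin a d * (fwd_diff g ^^ d) \<psi> u)"
    by (simp add: fwd_diff_def mult.commute)
qed

text \<open>Relation (IV) for difference operators: Newton's expansion of \<open>\<Delta>\<^bsub>a h\<^esub>\<close> in the
  binomial coefficients of \<open>a\<close>, applied passage by passage.\<close>
lemma multi_diff_mset_eq_sum_I_d:
  fixes \<psi> :: "('a \<times> 'a \<Rightarrow> 'b) \<Rightarrow> 'b"
  assumes "numerical_polymap m \<psi>"
  shows "multi_diff (\<lambda>p. passage_act p v) (mset ps) \<psi> w =
    (\<Sum>ds\<in>assignments m ps. prod_list (map (\<lambda>(p, k). bin (snd (snd p)) k) (zip ps ds))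
       * multi_diff (\<lambda>p. passage_act p v) (I_d ps ds) \<psi> w)"
  using assms
proof (induction ps arbitrary: m \<psi> w)
  case Nil
  then show ?case by (simp add: assignments_Nil I_d_def)
next
  case (Cons p ps)
  define H where "H = (\<lambda>p. passage_act p v)"
  obtain x y a where p: "p = (x, y, a)" by (cases p) auto
  define g where "g = passage_act (x, y, 1) v"
  define c where "c ds = prod_list (map (\<lambda>(p, k). bin (snd (snd p)) k) (zip ps ds))" for ds
  have "multi_diff H (mset (p # ps)) \<psi> w = multi_diff H (mset ps) (fwd_diff (smul a g) \<psi>) w"
    by (simp add: multi_diff_fwd_diff H_def g_def p passage_act_label[of x y a])
  also have "\<dots> = (\<Sum>d\<in>{1..m}. bin a d * multi_diff H (mset ps) ((fwd_diff g ^^ d) \<psi>) w)"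
    by (simp add: fwd_diff_smul_Newton[OF Cons.prems] multi_diff_sum multi_diff_scale)
  also have "\<dots> = (\<Sum>d\<in>{1..m}. bin a d *
      (\<Sum>ds\<in>assignments (m - d) ps. c ds * multi_diff H (I_d (p # ps) (d # ds)) \<psi> w))"
  proof (rule sum.cong[OF refl])
    fix d assume "d \<in> {1..m}"
    then have "numerical_polymap (m - d) ((fwd_diff g ^^ d) \<psi>)"
      using numerical_polymap_fwd_diff_power[OF Cons.prems] by simp
    moreover have "multi_diff H (I_d ps ds) ((fwd_diff g ^^ d) \<psi>) w = multi_diff H (I_d (p # ps) (d # ds)) \<psi> w"
      for ds by (simp add: I_d_Cons p multi_diff_union multi_diff_replicate H_def g_def)
    ultimately show "bin a d * multi_diff H (mset ps) ((fwd_diff g ^^ d) \<psi>) w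
        = bin a d * (\<Sum>ds\<in>assignments (m - d) ps. c ds * multi_diff H (I_d (p # ps) (d # ds)) \<psi> w)"
      using Cons.IH unfolding H_def c_def by simp
  qed
  also have "\<dots> = (\<Sum>ds\<in>assignments m (p # ps). prod_list (map (\<lambda>(p, k). bin (snd (snd p)) k) (zip (p # ps) ds))
      * multi_diff H (I_d (p # ps) ds) \<psi> w)"
    by (simp add: sum_assignments_Cons sum_distrib_left c_def p mult.assoc)
  finally show ?case unfolding H_def .
qed

definition vanishes_on_polymaps :: "nat \<Rightarrow> (('a, 'b) maze \<Rightarrow> 'b) \<Rightarrow> bool" where
  "vanishes_on_polymaps n r \<longleftrightarrow>
     finite (supp r) \<and> (\<forall>\<psi> v. numerical_polymap n \<psi> \<longrightarrow> lin_maze_diff r \<psi> v = 0)"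

lemma lin_maze_diff_relation_IV:
  fixes \<psi> :: "('a \<times> 'a \<Rightarrow> 'b) \<Rightarrow> 'b"
  assumes "numerical_polymap n \<psi>"
  shows "lin_maze_diff (\<lambda>M. delta (mset ps) M -
       (\<Sum>ds\<in>assignments n ps. prod_list (map (\<lambda>(p, k). bin (snd (snd p)) k) (zip ps ds))
          * delta (I_d ps ds) M)) \<psi> v = 0"
  using multi_diff_mset_eq_sum_I_d[OF assms]
  by (simp add: lin_maze_diff_diff lin_maze_diff_delta lin_maze_diff_sum lin_maze_diff_smult
      finite_supp_diff finite_supp_delta finite_supp_sum finite_supp_smult finite_assignments maze_diff_def)

lemma vanishes_on_polymaps_relation:
  fixes r :: "('a, 'b) maze \<Rightarrow> 'b"
  assumes "r \<in> laby_rels \<union> rels_III n \<union> rels_IV n"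
  shows "vanishes_on_polymaps n r"
proof -
  from assms consider
      (I) P x y where "r = delta (P + {#(x, y, 0)#})"
    | (II) P x y a b where "r = (\<lambda>M. delta (P + {#(x, y, a + b)#}) M - delta (P + {#(x, y, a)#}) M
            - delta (P + {#(x, y, b)#}) M - delta (P + {#(x, y, a), (x, y, b)#}) M)"
    | (III) P where "r = delta P" "n < size P"
    | (IV) ps where "r = (\<lambda>M. delta (mset ps) M - (\<Sum>ds\<in>assignments n ps.
          prod_list (map (\<lambda>(p, k). bin (snd (snd p)) k) (zip ps ds)) * delta (I_d ps ds) M))"
    unfolding laby_rels_def rels_III_def rels_IV_def by blast
  then show ?thesis
  proof cases
    case I
    then show ?thesis
      by (simp add: vanishes_on_polymaps_def lin_maze_diff_relation_I finite_supp_delta)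
  next
    case II
    then show ?thesis
      by (simp add: vanishes_on_polymaps_def lin_maze_diff_relation_II finite_supp_diff finite_supp_delta)
  next
    case III
    then show ?thesis
      using lin_maze_diff_relation_III[of n _ P] numerical_polymap_polynomial_map
      by (auto simp: vanishes_on_polymaps_def finite_supp_delta)
  next
    case IV
    then show ?thesis
      by (simp add: vanishes_on_polymaps_def lin_maze_diff_relation_IV finite_supp_diff finite_supp_delta
          finite_supp_sum finite_supp_smult finite_assignments)
  qed
qed

text \<open>Composition with mazes preserves the property, since the operator of a maze maps
  numerical polynomial maps of degree \<open>\<le> n\<close> to such maps.\<close>
lemma vanishes_on_polymaps_kernel:
  fixes k :: "('a, 'b) maze \<Rightarrow> 'b"
  assumes "k \<in> laby_n_kernel n"
  shows "vanishes_on_polymaps n k"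
  using assms unfolding laby_n_kernel_def
proof (induction rule: lspan.induct)
  case zero
  then show ?case by (simp add: vanishes_on_polymaps_def supp_def lin_maze_diff_zero)
next
  case (gen g)
  then obtain A B r where g: "g = comp (delta A) (comp r (delta B))"
    and "vanishes_on_polymaps n r"
    using vanishes_on_polymaps_relation by blast
  then have r: "finite (supp r)" "\<And>\<psi> v. numerical_polymap n \<psi> \<Longrightarrow> lin_maze_diff r \<psi> v = 0"
    by (auto simp: vanishes_on_polymaps_def)
  have fin: "finite (supp (comp r (delta B)))"
    by (rule finite_supp_comp[OF r(1) finite_supp_delta])
  have "lin_maze_diff g \<psi> v = maze_diff A (\<lambda>u. lin_maze_diff r (\<lambda>u'. maze_diff B \<psi> u') u) v" for \<psi> v
    unfolding g by (simp add: lin_maze_diff_comp fin r(1) finite_supp_delta lin_maze_diff_delta)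
  then have "lin_maze_diff g \<psi> v = 0" if "numerical_polymap n \<psi>" for \<psi> v
    using r(2)[OF numerical_polymap_maze_diff[OF that]] by (simp add: maze_diff_zero)
  moreover have "finite (supp g)"
    unfolding g by (rule finite_supp_comp[OF finite_supp_delta fin])
  ultimately show ?case by (simp add: vanishes_on_polymaps_def)
next
  case (add a b)
  then show ?case by (simp add: vanishes_on_polymaps_def finite_supp_add lin_maze_diff_add)
next
  case (smult a c)
  then show ?case by (simp add: vanishes_on_polymaps_def finite_supp_smult lin_maze_diff_smult)
qed

subsection \<open>A dual basis for pure mazes\<close>

definition bin_monomial :: "('a \<times> 'a) set \<Rightarrow> ('a \<times> 'a) multiset \<Rightarrow> ('a \<times> 'a \<Rightarrow> 'b) \<Rightarrow> 'b" where
  "bin_monomial Z K w = (\<Prod>z\<in>Z. bin (w z) (count K z))"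

lemma fwd_diff_delta_bin_monomial:
  assumes "finite Z" "set_mset K \<subseteq> Z"
  shows "fwd_diff (delta z0) (bin_monomial Z K) = (if z0 \<in># K then bin_monomial Z (K - {#z0#}) else (\<lambda>w. 0))"
proof
  fix w :: "'a \<times> 'a \<Rightarrow> 'b"
  show "fwd_diff (delta z0) (bin_monomial Z K) w = (if z0 \<in># K then bin_monomial Z (K - {#z0#}) else (\<lambda>w. 0)) w"
  proof (cases "z0 \<in> Z")
    case False
    then have "z0 \<notin># K" using assms(2) by blast
    have "bin_monomial Z K (w + delta z0) = bin_monomial Z K w"
      unfolding bin_monomial_def using False by (intro prod.cong) (auto simp: delta_def)
    then show ?thesis using \<open>z0 \<notin># K\<close> by (simp add: fwd_diff_def)
  next
    case True
    define R where "R = (\<Prod>z\<in>Z - {z0}. bin (w z) (count K z))"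
    have shifted: "bin_monomial Z K (w + delta z0) = bin (w z0 + 1) (count K z0) * R"
      unfolding bin_monomial_def R_def prod.remove[OF assms(1) True]
      by (auto simp: delta_def intro!: prod.cong)
    have unshifted: "bin_monomial Z K' w = bin (w z0) (count K' z0) * R"
      if "\<And>z. z \<noteq> z0 \<Longrightarrow> count K' z = count K z" for K'
      unfolding bin_monomial_def R_def prod.remove[OF assms(1) True] using that by simp
    show ?thesis
    proof (cases "count K z0")
      case 0
      then have "z0 \<notin># K" by (simp add: not_in_iff)
      then show ?thesis using shifted unshifted[of K] 0 by (simp add: fwd_diff_def bin_0)
    next
      case (Suc j)
      have "fwd_diff (delta z0) (bin_monomial Z K) w = (bin (w z0 + 1) (Suc j) - bin (w z0) (Suc j)) * R"
        using shifted unshifted[of K] Suc by (simp add: fwd_diff_def algebra_simps)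
      also have "\<dots> = bin (w z0) j * R" by (simp add: bin_Pascal)
      also have "\<dots> = bin_monomial Z (K - {#z0#}) w" using unshifted[of "K - {#z0#}"] Suc by simp
      finally show ?thesis using Suc by (simp add: count_eq_zero_iff[symmetric])
    qed
  qed
qed

lemma multi_diff_pure_bin_monomial:
  assumes "finite Z" "set_mset K \<subseteq> Z" "pure M"
  shows "multi_diff (\<lambda>p. passage_act p id_matrix) M (bin_monomial Z K) =
    (if pairs_of M \<subseteq># K then bin_monomial Z (K - pairs_of M) else (\<lambda>w. 0))"
  using assms(3)
proof (induction M)
  case (add p M)
  obtain x y where p: "p = (x, y, 1)" using add.prems by (cases p) (auto simp: pure_def)
  have IH: "multi_diff (\<lambda>p. passage_act p id_matrix) M (bin_monomial Z K) =
      (if pairs_of M \<subseteq># K then bin_monomial Z (K - pairs_of M) else (\<lambda>w. 0))"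
    using add by (simp add: pure_def)
  have pairs: "pairs_of (add_mset p M) = add_mset (x, y) (pairs_of M)"
    by (simp add: pairs_of_def p)
  have step: "multi_diff (\<lambda>p. passage_act p id_matrix) (add_mset p M) (bin_monomial Z K)
      = fwd_diff (delta (x, y)) (multi_diff (\<lambda>p. passage_act p id_matrix) M (bin_monomial Z K))"
    by (simp add: p passage_act_id_matrix)
  show ?case
  proof (cases "pairs_of M \<subseteq># K")
    case True
    have "set_mset (K - pairs_of M) \<subseteq> Z" using assms(2) by (meson in_diffD subset_iff)
    then show ?thesis
      unfolding step IH pairs using True
      by (simp add: fwd_diff_delta_bin_monomial[OF assms(1)] add_mset_subseteq_mset_iff)
  next
    case False
    then show ?thesis unfolding step IH pairs by (simp add: add_mset_subseteq_mset_iff fwd_diff_def)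
  qed
qed (simp add: pairs_of_def)

lemma bin_monomial_0:
  assumes "finite Z" "set_mset K \<subseteq> Z"
  shows "bin_monomial Z K 0 = (if K = {#} then 1 else 0)"
proof (cases "K = {#}")
  case False
  then obtain z where "z \<in># K" by blast
  then have "count K z = Suc (count K z - 1)" by simp
  then have "bin (0::'b) (count K z) = 0" by (metis bin_zero_Suc)
  moreover have "z \<in> Z" using \<open>z \<in># K\<close> assms(2) by blast
  ultimately show ?thesis using False assms(1) by (auto simp: bin_monomial_def intro: prod_zero)
qed (simp add: bin_monomial_def bin_0)

lemma maze_diff_pure_bin_monomial:
  assumes "pure M" "pure Q"
  shows "maze_diff M (bin_monomial (set_mset (pairs_of Q)) (pairs_of Q)) id_matrix = (if M = Q then 1 else 0)"
proof -
  have "maze_diff M (bin_monomial (set_mset (pairs_of Q)) (pairs_of Q)) id_matrix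
      = (if pairs_of M \<subseteq># pairs_of Q \<and> pairs_of Q - pairs_of M = {#} then 1 else 0)"
    unfolding maze_diff_def multi_diff_pure_bin_monomial[OF finite_set_mset subset_refl assms(1)]
    by (simp add: bin_monomial_0 subset_eq in_diffD)
  also have "\<dots> = (if M = Q then 1 else 0)"
    using pure_eq_iff_pairs_of_eq[OF assms] by (auto simp: subset_mset.antisym Diff_eq_empty_iff_mset)
  finally show ?thesis .
qed

lemma numerical_polymap_bin_monomial:
  "size K \<le> n \<Longrightarrow> numerical_polymap n (bin_monomial (set_mset K) K)"
  using numerical_polymap_prod_bin[of "set_mset K" "count K"]
  by (auto simp: bin_monomial_def[abs_def] size_multiset_overloaded_eq
      intro: numerical_polymap_mono)

text \<open>Pairing with the test function of \<open>Q\<close> extracts the coefficient of \<open>Q\<close>.\<close>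
lemma pure_combination_in_kernel_eq_0:
  fixes c :: "('a, 'b) maze \<Rightarrow> 'b"
  assumes "\<And>Q. c Q \<noteq> 0 \<Longrightarrow> pure Q \<and> size Q \<le> n" "c \<in> laby_n_kernel n"
  shows "c = (\<lambda>_. 0)"
proof
  fix Q
  show "c Q = 0"
  proof (rule ccontr)
    assume "c Q \<noteq> 0"
    then have Q: "pure Q" "size (pairs_of Q) \<le> n" using assms(1) by (auto simp: pairs_of_def)
    define \<phi> :: "('a \<times> 'a \<Rightarrow> 'b) \<Rightarrow> 'b" where "\<phi> = bin_monomial (set_mset (pairs_of Q)) (pairs_of Q)"
    have "vanishes_on_polymaps n c"
      by (rule vanishes_on_polymaps_kernel[OF assms(2)])
    then have "finite (supp c)" "lin_maze_diff c \<phi> id_matrix = 0"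
      unfolding \<phi>_def using numerical_polymap_bin_monomial[OF Q(2)]
      by (auto simp: vanishes_on_polymaps_def)
    moreover have "lin_maze_diff c \<phi> id_matrix = (\<Sum>M\<in>supp c. if M = Q then c M else 0)"
      unfolding lin_maze_diff_def \<phi>_def using assms(1)
      by (intro sum.cong refl) (simp add: maze_diff_pure_bin_monomial[OF _ Q(1)] supp_def)
    ultimately show False using \<open>c Q \<noteq> 0\<close> by (simp add: supp_def)
  qed
qed

end

theorem mainTheorem12:
  fixes n :: nat and X Y :: "'a set"
  assumes "binomial_ring TYPE('b::comm_ring_1)"
    and "finite X" and "finite Y"
  shows "(\<forall>P :: ('a, 'b) maze. is_maze X Y P \<longrightarrow>
            (\<exists>s r. s \<in> lspan (delta ` {Q. is_maze X Y Q \<and> pure Q \<and> size Q \<le> n})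
                 \<and> r \<in> laby_n_kernel n \<and> delta P = (\<lambda>M. s M + r M)))
       \<and> (\<forall>c :: ('a, 'b) maze \<Rightarrow> 'b.
            (\<forall>Q. \<not> (is_maze X Y Q \<and> pure Q \<and> size Q \<le> n) \<longrightarrow> c Q = 0)
            \<longrightarrow> c \<in> laby_n_kernel n \<longrightarrow> c = (\<lambda>_. 0))"
  using delta_eq_pure_combination_plus_kernel[OF assms(2,3)]
    pure_combination_in_kernel_eq_0[OF assms(1)]
  by blast

end
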